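(* Let $\mathcal{T}$ be a transversely convex tube in standard position, with support map $\Gamma$, and suppose that for each $z\in(-1,1)$ the horizontal cross-section $\mathcal{O}(z)$ is central about $\mathbf{c}(z)$. Fix a tilt direction $\tau\in S^{1}$, and for each $z$ let $\mathbf{c}_{\varepsilon}(\theta,z)$ denote the centrix of the oval $\mathcal{O}(z,\varepsilon)$ as defined below. Then $$\frac{\partial\mathbf{c}_{\varepsilon}}{\partial\varepsilon}(\theta,z)\Big|_{\varepsilon=0} =(\tau\cdot i e^{i\theta})\Bigl(\frac{\partial\Gamma^{*}}{\partial z}\cdot e^{i\theta}\Bigr)\frac{\partial\Gamma^{*}}{\partial\theta} +(\tau\cdot\mathbf{c}(z))\,\mathbf{c}'(z)+(\tau\cdot\Gamma^{*})\frac{\partial\Gamma^{*}}{\partial z},$$ where $\Gamma^{*}$ and its derivatives are evaluated at $(\theta,z)$.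
   Context: Identify $\mathbb{R}^{2}\cong\mathbb{C}$, points of $\mathbb{R}^{3}$ as $(p,z)$. An oval is a $C^{2}$ embedded closed plane curve with nowhere-vanishing curvature. A map $\gamma:S^{1}\to\mathbb{R}^{2}$ support-parametrizes an oval if it parametrizes it and $\gamma'(\theta)=|\gamma'(\theta)|\,i e^{i\theta}$ (i.e. $\gamma$ inverts the outer unit normal). For an oval with support parametrization $\gamma$, its centrix is $\theta\mapsto\frac12(\gamma(\theta)+\gamma(\theta+\pi))$. A transversely convex tube in standard position is the image $\mathcal{T}$ of an embedding $(\theta,z)\mapsto(\mathbf{c}_{0}(z)+\gamma(z;\theta),z)$ on $S^{1}\times(-1,1)$ with $C^{2}$ data and each $\gamma(z;\cdot)$ an oval with centroid at the origin. Let $\mathcal{O}(z)\subset\mathbb{R}^{2}$ be the projection of $\mathcal{T}\cap\{z\text{-coordinate}=z\}$. The support map $\Gamma:S^{1}\times(-1,1)\to\mathbb{R}^{2}$ is defined by: $\Gamma(\cdot,z)$ support-parametrizes $\mathcal{O}(z)$. Under the hypothesis, $\Gamma^{*}(\theta,z)=\frac12(\Gamma(\theta,z)-\Gamma(\theta+\pi,z))$, so $\Gamma=\mathbf{c}+\Gamma^{*}$. For $\tau\in S^{1}$, $b\in(-1,1)$, $\varepsilon\in\mathbb{R}$, let $P_{\tau,b}(\varepsilon)=\{(p,z): z=\varepsilon\,(p\cdot\tau)+b\}$ and let $\mathcal{O}(b,\varepsilon)$ be the projection to $\mathbb{R}^{2}$ of $\mathcal{T}\cap P_{\tau,b}(\varepsilon)$,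 an oval for $|\varepsilon|$ small. Let $\zeta(\varepsilon,\theta)$ be the $C^{2}$ function near $\varepsilon=0$ with $\zeta(0,\theta)=b$ and $\zeta(\varepsilon,\theta)=b+\varepsilon\,\tau\cdot\Gamma(\theta,\zeta(\varepsilon,\theta))$, so $\theta\mapsto\Gamma(\theta,\zeta(\varepsilon,\theta))$ parametrizes $\mathcal{O}(b,\varepsilon)$; let $\theta_{\varepsilon}$ be the diffeomorphisms of $S^{1}$, differentiable in $\varepsilon$ with $\theta_{0}=\mathrm{id}$, such that $\theta\mapsto\Gamma(\theta_{\varepsilon}(\theta),\zeta(\varepsilon,\theta_{\varepsilon}(\theta)))$ support-parametrizes $\mathcal{O}(b,\varepsilon)$. Then the centrix of $\mathcal{O}(b,\varepsilon)$ is $\mathbf{c}_{\varepsilon}(\theta,b)=\frac12\bigl[\Gamma(\theta_{\varepsilon}(\theta),\zeta(\varepsilon,\theta_{\varepsilon}(\theta)))+\Gamma(\theta_{\varepsilon}(\theta+\pi),\zeta(\varepsilon,\theta_{\varepsilon}(\theta+\pi)))\bigr]$, and in the claim $b=z$. *)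

theory Defs
  imports "HOL-Analysis.Analysis"
begin

text \<open>R^2 is identified with the complex plane; points of R^3 are pairs (p, z).
  S^1 is parametrised by real angles; functions on S^1 are 2 pi-periodic functions on the reals.\<close>

definition C2_on :: "'a::real_normed_vector set \<Rightarrow> ('a \<Rightarrow> 'b::real_normed_vector) \<Rightarrow> bool" where
  "C2_on S f \<longleftrightarrow>
     (\<exists>(D :: 'a \<Rightarrow> ('a \<Rightarrow>\<^sub>L 'b)) (D2 :: 'a \<Rightarrow> ('a \<Rightarrow>\<^sub>L ('a \<Rightarrow>\<^sub>L 'b))).
        (\<forall>x\<in>S. (f has_derivative blinfun_apply (D x)) (at x)
               \<and> (D has_derivative blinfun_apply (D2 x)) (at x))
        \<and> continuous_on S D2)"

text \<open>A C^2 regular simple closed curve with nowhere-vanishing curvature, parametrised by S^1.\<close>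
definition oval_param :: "(real \<Rightarrow> complex) \<Rightarrow> bool" where
  "oval_param g \<longleftrightarrow>
     (\<forall>t. g (t + 2*pi) = g t) \<and> inj_on g {0..<2*pi} \<and> C2_on UNIV g \<and>
     (\<forall>t. vector_derivative g (at t) \<noteq> 0) \<and>
     (\<forall>t. Im (cnj (vector_derivative g (at t)) *
              vector_derivative (\<lambda>s. vector_derivative g (at s)) (at t)) \<noteq> 0)"

definition is_oval :: "complex set \<Rightarrow> bool" where
  "is_oval C \<longleftrightarrow> (\<exists>g. oval_param g \<and> g ` {0..<2*pi} = C)"

definition support_param :: "(real \<Rightarrow> complex) \<Rightarrow> complex set \<Rightarrow> bool" where
  "support_param g C \<longleftrightarrow>
     is_oval C \<and> (\<forall>t. g (t + 2*pi) = g t) \<and> inj_on g {0..<2*pi} \<and> g ` {0..<2*pi} = C \<and>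
     (\<forall>t. \<exists>d. (g has_vector_derivative d) (at t) \<and>
              d = complex_of_real (cmod d) * \<i> * exp (\<i> * complex_of_real t))"

definition tube :: "(real \<Rightarrow> complex) \<Rightarrow> (real \<Rightarrow> real \<Rightarrow> complex) \<Rightarrow> (complex \<times> real) set" where
  "tube c0 \<gamma> = (\<lambda>(\<theta>, z). (c0 z + \<gamma> z \<theta>, z)) ` (UNIV \<times> {-1<..<1})"

text \<open>Transversely convex tube in standard position (data c0, gamma);
  each cross-section oval has (area) centroid at the origin.\<close>
definition tc_tube_std :: "(real \<Rightarrow> complex) \<Rightarrow> (real \<Rightarrow> real \<Rightarrow> complex) \<Rightarrow> bool" where
  "tc_tube_std c0 \<gamma> \<longleftrightarrow>
     C2_on {-1<..<1} c0 \<and>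
     C2_on (UNIV \<times> {-1<..<1}) (\<lambda>(\<theta>, z). \<gamma> z \<theta>) \<and>
     (\<forall>z\<in>{-1<..<1}. oval_param (\<gamma> z) \<and>
        integral (inside (\<gamma> z ` {0..<2*pi})) (\<lambda>p. p) = 0)"

definition hsec :: "(complex \<times> real) set \<Rightarrow> real \<Rightarrow> complex set" where
  "hsec T z = {p. (p, z) \<in> T}"

definition tsec :: "(complex \<times> real) set \<Rightarrow> complex \<Rightarrow> real \<Rightarrow> real \<Rightarrow> complex set" where
  "tsec T \<tau> b \<epsilon> = {p. (p, \<epsilon> * (p \<bullet> \<tau>) + b) \<in> T}"

definition central_about :: "complex set \<Rightarrow> complex \<Rightarrow> bool" where
  "central_about S c \<longleftrightarrow> (\<forall>p\<in>S. 2 * c - p \<in> S)"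

definition Gamma_star :: "(real \<Rightarrow> real \<Rightarrow> complex) \<Rightarrow> real \<Rightarrow> real \<Rightarrow> complex" where
  "Gamma_star \<Gamma> \<theta> z = (\<Gamma> \<theta> z - \<Gamma> (\<theta> + pi) z) / 2"

definition tilt_centrix ::
  "(real \<Rightarrow> real \<Rightarrow> complex) \<Rightarrow> (real \<Rightarrow> real \<Rightarrow> real) \<Rightarrow> (real \<Rightarrow> real \<Rightarrow> real)
     \<Rightarrow> real \<Rightarrow> real \<Rightarrow> complex" where
  "tilt_centrix \<Gamma> \<zeta> \<theta>e \<epsilon> \<theta> =
     (\<Gamma> (\<theta>e \<epsilon> \<theta>) (\<zeta> \<epsilon> (\<theta>e \<epsilon> \<theta>)) + \<Gamma> (\<theta>e \<epsilon> (\<theta> + pi)) (\<zeta> \<epsilon> (\<theta>e \<epsilon> (\<theta> + pi)))) / 2"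

end

theory Submission
  imports Defs
begin

text \<open>For each level \<open>w\<close>, \<open>\<Gamma> \<theta> w\<close> is the point of the oval \<open>O(w)\<close> where the height
  \<open>p \<bullet> e\<^sup>i\<^sup>\<theta>\<close> is maximal. Nonvanishing curvature makes this maximum nondegenerate, so the
  implicit function theorem shows that \<open>\<Gamma>\<close> is \<open>C\<^sup>1\<close> in \<open>(\<theta>, w)\<close>; central symmetry gives
  \<open>\<Gamma> (\<theta> + \<pi>) = 2 c - \<Gamma> \<theta>\<close>, so \<open>c\<close> and \<open>\<Gamma>\<^sup>*\<close> are differentiable. The centrix of the
  tilted oval is the average of \<open>\<Gamma> (\<theta>\<^sub>\<epsilon> \<theta>) (\<zeta> \<epsilon> (\<theta>\<^sub>\<epsilon> \<theta>))\<close> over \<open>\<theta>\<close> and \<open>\<theta> + \<pi>\<close>.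
  Differentiating \<open>\<zeta> = z + \<epsilon> \<tau> \<bullet> \<Gamma>\<close> gives \<open>\<partial>\<^sub>\<epsilon>\<zeta> = \<tau> \<bullet> \<Gamma>\<close> at \<open>\<epsilon> = 0\<close>, and the support
  condition of the tilted oval, divided by \<open>\<epsilon>\<close>, gives in the limit
  \<open>\<partial>\<^sub>\<epsilon>\<theta>\<^sub>\<epsilon> = (\<tau> \<bullet> i e\<^sup>i\<^sup>\<theta>) (\<partial>\<^sub>z\<Gamma> \<bullet> e\<^sup>i\<^sup>\<theta>)\<close>. Adding the two antipodal
  contributions, the terms regroup into those of the formula.\<close>

section \<open>Functions of period \<open>2\<pi>\<close>\<close>

lemma periodic_shift_nat:
  fixes g :: "real \<Rightarrow> 'a"
  assumes per: "\<forall>t. g (t + 2*pi) = g t"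
  shows "g (t + 2*pi * real n) = g t"
proof (induction n arbitrary: t)
  case (Suc n)
  have "g (t + 2*pi * real (Suc n)) = g ((t + 2*pi * real n) + 2*pi)"
    by (simp add: algebra_simps)
  then show ?case using per Suc by simp
qed simp

lemma periodic_shift_int:
  fixes g :: "real \<Rightarrow> 'a"
  assumes per: "\<forall>t. g (t + 2*pi) = g t"
  shows "g (t + 2*pi * of_int k) = g t"
proof (cases "k \<ge> 0")
  case True
  then obtain n where "k = int n" by (metis nonneg_eq_int)
  then show ?thesis using periodic_shift_nat[OF per, of t n] by simp
next
  case False
  then obtain n where k: "k = - int n" by (metis neg_int_cases linorder_not_le less_imp_le)
  have "g t = g ((t - 2*pi * real n) + 2*pi * real n)" by simp
  also have "\<dots> = g (t - 2*pi * real n)" using periodic_shift_nat[OF per] by blast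
  finally show ?thesis using k by simp
qed

lemma shift_into_period: "\<exists>k::int. c \<le> u + 2*pi * of_int k \<and> u + 2*pi * of_int k < c + 2*pi"
proof -
  define x where "x = (u - c) / (2*pi)"
  have floor: "of_int \<lfloor>x\<rfloor> \<le> x" "x < of_int \<lfloor>x\<rfloor> + 1" by linarith+
  have "u + 2*pi * of_int (- \<lfloor>x\<rfloor>) = c + 2*pi * (x - of_int \<lfloor>x\<rfloor>)"
    unfolding x_def by (simp add: field_simps)
  moreover have "0 \<le> 2*pi * (x - of_int \<lfloor>x\<rfloor>)" "2*pi * (x - of_int \<lfloor>x\<rfloor>) < 2*pi"
    using floor by (simp; linarith)+
  ultimately show ?thesis by (intro exI[of _ "- \<lfloor>x\<rfloor>"]) linarith
qed

lemma periodic_eq_imp_shift: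
  fixes g :: "real \<Rightarrow> 'a"
  assumes per: "\<forall>t. g (t + 2*pi) = g t" and inj: "inj_on g {0..<2*pi}" and eq: "g a = g b"
  shows "\<exists>k::int. a = b + 2*pi * of_int k"
proof -
  obtain ka :: int where ka: "0 \<le> a + 2*pi*ka" "a + 2*pi*ka < 0 + 2*pi"
    using shift_into_period by blast
  obtain kb :: int where kb: "0 \<le> b + 2*pi*kb" "b + 2*pi*kb < 0 + 2*pi"
    using shift_into_period by blast
  have "g (a + 2*pi*ka) = g (b + 2*pi*kb)" using periodic_shift_int[OF per] eq by simp
  then have "a + 2*pi*ka = b + 2*pi*kb" using inj ka kb by (auto simp: inj_on_def)
  then have "a = b + 2*pi * of_int (kb - ka)" by (simp add: algebra_simps)
  then show ?thesis by blast
qed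

lemma range_periodic:
  fixes g :: "real \<Rightarrow> 'a"
  assumes per: "\<forall>t. g (t + 2*pi) = g t"
  shows "range g = g ` {0..<2*pi}"
proof
  show "range g \<subseteq> g ` {0..<2*pi}"
  proof
    fix y assume "y \<in> range g"
    then obtain x where x: "y = g x" by blast
    obtain k :: int where k: "0 \<le> x + 2*pi * of_int k" "x + 2*pi * of_int k < 0 + 2*pi"
      using shift_into_period by blast
    have "g (x + 2*pi * of_int k) = g x" using periodic_shift_int[OF per] by blast
    then show "y \<in> g ` {0..<2*pi}" using x k by (metis atLeastLessThan_iff add_0 image_eqI)
  qed
qed auto

lemma int_eq_0_if_small:
  assumes "\<bar>2*pi * real_of_int k\<bar> < 2*pi" shows "k = 0"
proof -
  have "\<bar>real_of_int k\<bar> < 1" using assms by (simp add: abs_mult)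
  then show ?thesis by linarith
qed

text \<open>The parameters at distance at least \<open>\<delta>\<close> from \<open>\<sigma>\<close> modulo \<open>2\<pi>\<close> form a compact set
  whose image stays away from \<open>f \<sigma>\<close>.\<close>
lemma periodic_inj_near_preimage:
  fixes f :: "real \<Rightarrow> 'a::metric_space"
  assumes cont: "continuous_on UNIV f" and per: "\<forall>t. f (t + 2*pi) = f t"
    and inj: "inj_on f {0..<2*pi}" and \<delta>: "0 < \<delta>" "\<delta> \<le> pi"
  shows "\<exists>\<eta>>0. \<forall>s. dist (f s) (f \<sigma>) < \<eta> \<longrightarrow> (\<exists>k::int. \<bar>s + 2*pi * of_int k - \<sigma>\<bar> < \<delta>)"
proof -
  define K where "K = {\<sigma>-pi..\<sigma>-\<delta>} \<union> {\<sigma>+\<delta>..\<sigma>+pi}"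
  have "compact K" "K \<noteq> {}" using \<delta> unfolding K_def by auto
  moreover have "continuous_on K (\<lambda>s. dist (f s) (f \<sigma>))"
    by (intro continuous_intros continuous_on_subset[OF cont]) auto
  ultimately obtain x0 where x0: "x0 \<in> K" "\<And>y. y \<in> K \<Longrightarrow> dist (f x0) (f \<sigma>) \<le> dist (f y) (f \<sigma>)"
    using continuous_attains_inf by metis
  have "f x0 \<noteq> f \<sigma>"
  proof
    assume "f x0 = f \<sigma>"
    then obtain k :: int where k: "x0 = \<sigma> + 2*pi * of_int k"
      using periodic_eq_imp_shift[OF per inj] by blast
    have "\<delta> \<le> \<bar>x0 - \<sigma>\<bar>" "\<bar>x0 - \<sigma>\<bar> \<le> pi" using x0(1) \<delta> unfolding K_def by auto
    then have "\<bar>2*pi * of_int k\<bar> < 2*pi" "k \<noteq> 0" using k \<delta> pi_gt_zero by auto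
    then show False using int_eq_0_if_small by blast
  qed
  show ?thesis
  proof (intro exI[of _ "dist (f x0) (f \<sigma>)"] conjI allI impI)
    show "0 < dist (f x0) (f \<sigma>)" using \<open>f x0 \<noteq> f \<sigma>\<close> by simp
    fix s assume s: "dist (f s) (f \<sigma>) < dist (f x0) (f \<sigma>)"
    obtain k :: int where k: "\<sigma> - pi \<le> s + 2*pi * of_int k" "s + 2*pi * of_int k < \<sigma> - pi + 2*pi"
      using shift_into_period by blast
    have "f (s + 2*pi * of_int k) = f s" using periodic_shift_int[OF per] by blast
    then have "s + 2*pi * of_int k \<notin> K" using x0(2) s by (metis not_le)
    then have "\<bar>s + 2*pi * of_int k - \<sigma>\<bar> < \<delta>" using k unfolding K_def by (auto simp: abs_if)
    then show "\<exists>k::int. \<bar>s + 2*pi * of_int k - \<sigma>\<bar> < \<delta>" by blast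
  qed
qed

section \<open>Support parametrisations\<close>

lemma inner_tangent_cis:
  "(complex_of_real r * \<i> * exp (\<i> * complex_of_real s)) \<bullet> cis t = r * sin (t - s)"
  by (simp add: inner_complex_def cis_conv_exp[symmetric] sin_diff algebra_simps)

locale support_curve =
  fixes g :: "real \<Rightarrow> complex"
  assumes periodic: "\<forall>t. g (t + 2*pi) = g t"
    and inj: "inj_on g {0..<2*pi}"
    and tangent: "\<forall>t. \<exists>d. (g has_vector_derivative d) (at t) \<and>
              d = complex_of_real (cmod d) * \<i> * exp (\<i> * complex_of_real t)"
begin

lemma shift_int: "g (s + 2*pi * of_int k) = g s"
  using periodic_shift_int[OF periodic] by blast

lemma continuous: "isCont g s"
  using tangent has_vector_derivative_continuous by blast

lemma height_has_derivative:
  "\<exists>r\<ge>0. ((\<lambda>s. g s \<bullet> cis t) has_real_derivative r * sin (t - s)) (at s)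
     \<and> (r = 0 \<longrightarrow> (g has_derivative (\<lambda>h. 0)) (at s))"
proof -
  obtain d where d: "(g has_vector_derivative d) (at s)"
     "d = complex_of_real (cmod d) * \<i> * exp (\<i> * complex_of_real s)"
    using tangent by blast
  have "((\<lambda>s. g s \<bullet> cis t) has_derivative (\<lambda>h. (h *\<^sub>R d) \<bullet> cis t)) (at s)"
    using d(1) unfolding has_vector_derivative_def by (auto intro!: derivative_eq_intros)
  moreover have "d \<bullet> cis t = cmod d * sin (t - s)"
    by (subst d(2)) (rule inner_tangent_cis)
  ultimately have "((\<lambda>s. g s \<bullet> cis t) has_real_derivative cmod d * sin (t - s)) (at s)"
    by (simp add: has_field_derivative_def mult_commute_abs)
  moreover have "cmod d = 0 \<longrightarrow> (g has_derivative (\<lambda>h. 0)) (at s)"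
    using d(1) unfolding has_vector_derivative_def by auto
  ultimately show ?thesis by (intro exI[of _ "cmod d"]) auto
qed

lemma height_mono_before:
  assumes "t - pi \<le> a" "a \<le> b" "b \<le> t"
  shows "g a \<bullet> cis t \<le> g b \<bullet> cis t"
proof (rule DERIV_nonneg_imp_nondecreasing[OF assms(2)])
  fix x assume "a \<le> x" "x \<le> b"
  then have "0 \<le> sin (t - x)" using assms by (intro sin_ge_zero) auto
  then show "\<exists>y. ((\<lambda>s. g s \<bullet> cis t) has_real_derivative y) (at x) \<and> 0 \<le> y"
    using height_has_derivative[of t x] by (metis mult_nonneg_nonneg)
qed

lemma height_antimono_after:
  assumes "t \<le> a" "a \<le> b" "b \<le> t + pi"
  shows "g b \<bullet> cis t \<le> g a \<bullet> cis t"
proof (rule DERIV_nonpos_imp_nonincreasing[OF assms(2)])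
  fix x assume "a \<le> x" "x \<le> b"
  then have "0 \<le> sin (x - t)" using assms by (intro sin_ge_zero) auto
  then have "sin (t - x) \<le> 0" by (metis minus_diff_eq neg_le_0_iff_le sin_minus)
  then show "\<exists>y. ((\<lambda>s. g s \<bullet> cis t) has_real_derivative y) (at x) \<and> y \<le> 0"
    using height_has_derivative[of t x] by (metis mult_nonneg_nonpos)
qed

lemma height_le_support: "g s \<bullet> cis t \<le> g t \<bullet> cis t"
proof -
  obtain k :: int where k: "t - pi \<le> s + 2*pi * of_int k" "s + 2*pi * of_int k < t - pi + 2*pi"
    using shift_into_period by blast
  define s' where "s' = s + 2*pi * of_int k"
  have "g s' \<bullet> cis t \<le> g t \<bullet> cis t"
  proof (cases "s' \<le> t")
    case True then show ?thesis using height_mono_before[of t s' t] k s'_def by auto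
  next
    case False then show ?thesis using height_antimono_after[of t t s'] k s'_def by auto
  qed
  then show ?thesis unfolding s'_def shift_int .
qed

lemma no_stationary_interval:
  assumes "a < b" "b - a < 2*pi"
    and "\<And>x. a < x \<Longrightarrow> x < b \<Longrightarrow> (g has_derivative (\<lambda>h. 0)) (at x)"
  shows False
proof -
  have "g (a + (b-a)/3) = g (a + 2*(b-a)/3)"
    by (rule has_derivative_zero_unique_connected[of "{a<..<b}"])
       (use assms in \<open>auto simp: field_simps\<close>)
  then obtain k :: int where "a + (b-a)/3 = a + 2*(b-a)/3 + 2*pi * of_int k"
    using periodic_eq_imp_shift[OF periodic inj] by blast
  then have "2*pi * of_int k = - (b-a)/3" by linarith
  moreover have "0 < (b-a)/3" "(b-a)/3 < 2*pi" using assms by auto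
  ultimately have "\<bar>2*pi * of_int k\<bar> < 2*pi" "k \<noteq> 0" by auto
  then show False using int_eq_0_if_small by blast
qed

lemma stationary_where_height_constant:
  assumes const: "\<And>y. a \<le> y \<Longrightarrow> y \<le> b \<Longrightarrow> g y \<bullet> cis t = g a \<bullet> cis t"
    and x: "a < x" "x < b" and sin: "sin (t - x) \<noteq> 0"
  shows "(g has_derivative (\<lambda>h. 0)) (at x)"
proof -
  obtain r where r: "((\<lambda>s. g s \<bullet> cis t) has_real_derivative r * sin (t - x)) (at x)"
    "r = 0 \<longrightarrow> (g has_derivative (\<lambda>h. 0)) (at x)"
    using height_has_derivative[of t x] by blast
  have "r * sin (t - x) = 0"
  proof (rule DERIV_local_max[OF r(1)])
    show "0 < min (x - a) (b - x)" using x by simp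
    show "\<forall>y. \<bar>x - y\<bar> < min (x - a) (b - x) \<longrightarrow> g y \<bullet> cis t \<le> g x \<bullet> cis t"
    proof (intro allI impI)
      fix y assume "\<bar>x - y\<bar> < min (x - a) (b - x)"
      then have "g y \<bullet> cis t = g a \<bullet> cis t" by (intro const) (auto simp: abs_less_iff)
      moreover have "g x \<bullet> cis t = g a \<bullet> cis t" using x by (intro const) auto
      ultimately show "g y \<bullet> cis t \<le> g x \<bullet> cis t" by simp
    qed
  qed
  then show ?thesis using r(2) sin by simp
qed

lemma height_increases_before_support:
  assumes "t - pi \<le> v" "0 < e" "v + e \<le> t"
  shows "g v \<bullet> cis t < g (v + e) \<bullet> cis t"
proof (rule ccontr)
  let ?h = "\<lambda>s. g s \<bullet> cis t"
  assume "\<not> ?h v < ?h (v + e)"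
  then have const: "?h y = ?h v" if "v \<le> y" "y \<le> v + e" for y
  proof -
    have "?h v \<le> ?h y" "?h y \<le> ?h (v + e)"
      using height_mono_before[of t v y] height_mono_before[of t y "v + e"] that assms by linarith+
    then show ?thesis using \<open>\<not> ?h v < ?h (v + e)\<close> by linarith
  qed
  show False
  proof (rule no_stationary_interval[of v "v + e"])
    fix x assume x: "v < x" "x < v + e"
    have "0 < t - x" "t - x < pi" using x assms by linarith+
    then have "sin (t - x) \<noteq> 0" using sin_gt_zero by (metis less_irrefl)
    then show "(g has_derivative (\<lambda>h. 0)) (at x)"
      using stationary_where_height_constant[of v "v + e" t x] const x by (metis less_irrefl)
  qed (use assms pi_gt_zero in simp_all)
qed

lemma height_increases_after_support:
  assumes "t \<le> v - e" "0 < e" "v \<le> t + pi"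
  shows "g v \<bullet> cis t < g (v - e) \<bullet> cis t"
proof (rule ccontr)
  let ?h = "\<lambda>s. g s \<bullet> cis t"
  assume "\<not> ?h v < ?h (v - e)"
  then have const: "?h y = ?h (v - e)" if "v - e \<le> y" "y \<le> v" for y
  proof -
    have "?h y \<le> ?h (v - e)" "?h v \<le> ?h y"
      using height_antimono_after[of t "v - e" y] height_antimono_after[of t y v] that assms by linarith+
    then show ?thesis using \<open>\<not> ?h v < ?h (v - e)\<close> by linarith
  qed
  show False
  proof (rule no_stationary_interval[of "v - e" v])
    fix x assume x: "v - e < x" "x < v"
    have "0 < x - t" "x - t < pi" using x assms by linarith+
    then have "0 < sin (x - t)" by (rule sin_gt_zero)
    then have "sin (t - x) \<noteq> 0" using sin_minus[of "x - t"] by simp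
    then show "(g has_derivative (\<lambda>h. 0)) (at x)"
      using stationary_where_height_constant[of "v - e" v t x] const x by metis
  qed (use assms pi_gt_zero in simp_all)
qed

lemma local_max_height_imp_support:
  assumes "0 < \<delta>" and max: "\<And>u'. \<bar>u' - u\<bar> < \<delta> \<Longrightarrow> g u' \<bullet> cis t \<le> g u \<bullet> cis t"
  shows "\<exists>k::int. u = t + 2*pi * of_int k"
proof (rule ccontr)
  assume not_support: "\<nexists>k::int. u = t + 2*pi * of_int k"
  obtain k :: int where k: "t - pi \<le> u + 2*pi * of_int k" "u + 2*pi * of_int k < t - pi + 2*pi"
    using shift_into_period by blast
  define v where "v = u + 2*pi * of_int k"
  have v: "t - pi \<le> v" "v < t + pi" using k unfolding v_def by simp_all
  have "v \<noteq> t"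
  proof
    assume "v = t"
    then have "u = t + 2*pi * of_int (- k)" unfolding v_def by simp
    then show False using not_support by blast
  qed
  have vmax: "g y \<bullet> cis t \<le> g v \<bullet> cis t" if "\<bar>y - v\<bar> < \<delta>" for y
  proof -
    have "g y = g (y - 2*pi * of_int k)" using shift_int[of "y - 2*pi * of_int k" k] by simp
    moreover have "g v = g u" unfolding v_def by (rule shift_int)
    moreover have "\<bar>(y - 2*pi * of_int k) - u\<bar> < \<delta>" using that unfolding v_def by simp
    ultimately show ?thesis using max by simp
  qed
  define e where "e = min (\<delta>/2) \<bar>t - v\<bar>"
  have e: "0 < e" "e < \<delta>" "e \<le> \<bar>t - v\<bar>" using \<open>v \<noteq> t\<close> \<open>0 < \<delta>\<close> unfolding e_def by auto
  consider "v < t" | "t < v" using \<open>v \<noteq> t\<close> by linarith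
  then show False
  proof cases
    case 1
    then have "g v \<bullet> cis t < g (v + e) \<bullet> cis t"
      using height_increases_before_support v e by (simp add: abs_if)
    then show False using vmax[of "v + e"] e by simp
  next
    case 2
    then have "g v \<bullet> cis t < g (v - e) \<bullet> cis t"
      using height_increases_after_support v e by (simp add: abs_if)
    then show False using vmax[of "v - e"] e by simp
  qed
qed

end

lemma support_param_support_curve: "support_param g C \<Longrightarrow> support_curve g"
  unfolding support_param_def support_curve_def by blast

lemma bounded_linear_real_Pair:
  assumes "bounded_linear L"
  shows "L (a, b) = a *\<^sub>R L (1, 0) + b *\<^sub>R L (0, 1)"
proof -
  interpret L: bounded_linear L by fact
  have "(a, b) = a *\<^sub>R (1, 0) + b *\<^sub>R (0::real, 1::real)" by simp
  then show ?thesis by (metis L.add L.scale)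
qed

lemma bounded_linear_Pair_split:
  fixes L :: "'a::real_normed_vector \<times> real \<Rightarrow> 'b::real_normed_vector"
  assumes "bounded_linear L"
  shows "L (h, k) = L (h, 0) + k *\<^sub>R L (0, 1)"
proof -
  interpret L: bounded_linear L by fact
  have "(h, k) = (h, 0) + k *\<^sub>R (0, 1)" by simp
  then show ?thesis by (metis L.add L.scale)
qed

lemma has_derivative_partials:
  fixes f :: "real \<times> real \<Rightarrow> 'a::real_normed_vector"
  assumes d: "(f has_derivative L) (at (s, w))"
  shows "((\<lambda>s. f (s, w)) has_vector_derivative L (1, 0)) (at s)"
    and "((\<lambda>w. f (s, w)) has_vector_derivative L (0, 1)) (at w)"
proof -
  have bl: "bounded_linear L" using d has_derivative_bounded_linear by blast
  have "((\<lambda>s. f (s, w)) has_derivative (\<lambda>h. L (h, 0))) (at s)"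
    by (rule has_derivative_compose[of "\<lambda>s. (s, w)" "\<lambda>h. (h, 0)"]) (auto intro!: derivative_eq_intros d)
  moreover have "(\<lambda>h. L (h, 0)) = (\<lambda>h. h *\<^sub>R L (1, 0))"
    by (rule ext) (subst bounded_linear_real_Pair[OF bl], simp)
  ultimately show "((\<lambda>s. f (s, w)) has_vector_derivative L (1, 0)) (at s)"
    unfolding has_vector_derivative_def by simp
  have "((\<lambda>w. f (s, w)) has_derivative (\<lambda>h. L (0, h))) (at w)"
    by (rule has_derivative_compose[of "\<lambda>w. (s, w)" "\<lambda>h. (0, h)"]) (auto intro!: derivative_eq_intros d)
  moreover have "(\<lambda>h. L (0, h)) = (\<lambda>h. h *\<^sub>R L (0, 1))"
    by (rule ext) (subst bounded_linear_real_Pair[OF bl], simp)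
  ultimately show "((\<lambda>w. f (s, w)) has_vector_derivative L (0, 1)) (at w)"
    unfolding has_vector_derivative_def by simp
qed

lemma has_derivative_along_curve:
  fixes f :: "real \<times> real \<Rightarrow> 'a::real_normed_vector"
  assumes f: "(f has_derivative L) (at (u t, v t))"
    and u: "(u has_real_derivative u') (at t)" and v: "(v has_real_derivative v') (at t)"
  shows "((\<lambda>t. f (u t, v t)) has_vector_derivative (u' *\<^sub>R L (1, 0) + v' *\<^sub>R L (0, 1))) (at t)"
proof -
  have "((\<lambda>t. (u t, v t)) has_derivative (\<lambda>h. (u' * h, v' * h))) (at t)"
    using has_derivative_Pair[OF u[unfolded has_field_derivative_def] v[unfolded has_field_derivative_def]]
    by (simp add: mult.commute)
  from has_derivative_compose[OF this f]
  have "((\<lambda>t. f (u t, v t)) has_derivative (\<lambda>h. L (u' * h, v' * h))) (at t)" .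
  moreover have "L (u' * h, v' * h) = h *\<^sub>R (u' *\<^sub>R L (1, 0) + v' *\<^sub>R L (0, 1))" for h
    using bounded_linear_real_Pair[OF has_derivative_bounded_linear[OF f], of "u' * h" "v' * h"]
    by (simp add: scaleR_add_right mult.commute)
  ultimately show ?thesis unfolding has_vector_derivative_def by simp
qed

lemma DERIV_at_0_of_factor:
  fixes Z f :: "real \<Rightarrow> real"
  assumes Z: "(Z has_real_derivative d) (at 0)" and f: "isCont f 0"
    and eq: "\<forall>\<^sub>F \<epsilon> in at 0. Z \<epsilon> = Z 0 + \<epsilon> * f \<epsilon>"
  shows "d = f 0"
proof -
  have "((\<lambda>h. (Z (0 + h) - Z 0) / h) \<longlongrightarrow> d) (at 0)" using Z unfolding DERIV_def .
  moreover have "\<forall>\<^sub>F h in at 0. (Z (0 + h) - Z 0) / h = f h"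
    using eq eventually_neq_at_within[of 0 0] by eventually_elim simp
  ultimately have "(f \<longlongrightarrow> d) (at 0)" by (rule Lim_transform_eventually)
  moreover have "(f \<longlongrightarrow> f 0) (at 0)" using f by (simp add: continuous_at)
  ultimately show ?thesis using tendsto_unique[OF at_neq_bot] by blast
qed

lemma le_at_zero_of_decreasing_derivative:
  fixes h h' :: "real \<Rightarrow> real"
  assumes deriv: "\<And>x. lo \<le> x \<Longrightarrow> x \<le> hi \<Longrightarrow> (h has_real_derivative h' x) (at x)"
    and dec: "\<And>x y. lo \<le> x \<Longrightarrow> x < y \<Longrightarrow> y \<le> hi \<Longrightarrow> h' y < h' x"
    and \<sigma>: "lo \<le> \<sigma>" "\<sigma> \<le> hi" "h' \<sigma> = 0" and s: "lo \<le> s" "s \<le> hi"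
  shows "h s \<le> h \<sigma>"
proof (cases "s \<le> \<sigma>")
  case True
  show ?thesis
  proof (rule DERIV_nonneg_imp_nondecreasing[of s \<sigma> h, OF True])
    fix x assume "s \<le> x" "x \<le> \<sigma>"
    then have "0 \<le> h' x" using dec[of x \<sigma>] \<sigma> s by (cases "x = \<sigma>") auto
    then show "\<exists>y. (h has_real_derivative y) (at x) \<and> 0 \<le> y"
      using deriv \<open>s \<le> x\<close> \<open>x \<le> \<sigma>\<close> \<sigma> s by (meson order_trans)
  qed
next
  case False
  show ?thesis
  proof (rule DERIV_nonpos_imp_nonincreasing[of \<sigma> s h])
    show "\<sigma> \<le> s" using False by simp
    fix x assume "\<sigma> \<le> x" "x \<le> s"
    then have "h' x \<le> 0" using dec[of \<sigma> x] \<sigma> s by (cases "x = \<sigma>") auto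
    then show "\<exists>y. (h has_real_derivative y) (at x) \<and> y \<le> 0"
      using deriv \<open>\<sigma> \<le> x\<close> \<open>x \<le> s\<close> \<sigma> s by (meson order_trans)
  qed
qed

lemma dist_Pair_le: "dist (x, s) (y, r) \<le> dist x y + dist s r"
  by (simp add: dist_Pair_Pair) (metis zero_le_dist abs_of_nonneg sqrt_sum_squares_le_sum_abs)

lemma inner_cis_eq_0_imp_parallel:
  fixes a b :: complex
  assumes "a \<bullet> cis t = 0" "b \<bullet> cis t = 0"
  shows "Im (cnj a * b) = 0"
proof -
  define d where "d = Re a * Im b - Im a * Re b"
  have a: "Re a * cos t = - (Im a * sin t)" and b: "Re b * cos t = - (Im b * sin t)"
    using assms by (simp_all add: inner_complex_def eq_neg_iff_add_eq_0)
  have "d * cos t = Im b * (Re a * cos t) - Im a * (Re b * cos t)" unfolding d_def by algebra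
  then have cos: "d * cos t = 0" unfolding a b by algebra
  have "d * sin t = Re a * (Im b * sin t) - Re b * (Im a * sin t)" unfolding d_def by algebra
  also have "\<dots> = Re b * (Re a * cos t) - Re a * (Re b * cos t)"
    using a b by (simp add: algebra_simps)
  finally have sin: "d * sin t = 0" by algebra
  have "d = d * (sin t ^ 2 + cos t ^ 2)" by simp
  also have "\<dots> = (d * sin t) * sin t + (d * cos t) * cos t" by algebra
  finally show ?thesis using cos sin unfolding d_def by simp
qed

section \<open>An implicit function theorem for a scalar equation\<close>

lemma continuous_on_Times_slice_snd:
  assumes "continuous_on (U \<times> I) (\<lambda>(p, s). F p s)" "p \<in> U" "J \<subseteq> I"
  shows "continuous_on J (F p)"
proof -
  have "continuous_on J ((\<lambda>(p, s). F p s) \<circ> (\<lambda>s. (p, s)))"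
    by (rule continuous_on_compose[OF _ continuous_on_subset[OF assms(1)]])
       (use assms in \<open>auto intro!: continuous_intros\<close>)
  then show ?thesis by (simp add: o_def)
qed

lemma continuous_on_Times_slice_fst:
  assumes "continuous_on (U \<times> I) (\<lambda>(p, s). F p s)" "s \<in> I"
  shows "continuous_on U (\<lambda>p. F p s)"
proof -
  have "continuous_on U ((\<lambda>(p, s). F p s) \<circ> (\<lambda>p. (p, s)))"
    by (rule continuous_on_compose[OF _ continuous_on_subset[OF assms(1)]])
       (use assms in \<open>auto intro!: continuous_intros\<close>)
  then show ?thesis by (simp add: o_def)
qed

lemma IVT_strict_root:
  fixes f :: "real \<Rightarrow> real"
  assumes "continuous_on {x..y} f" "x < y" "0 < f x" "f y < 0"
  shows "\<exists>s. x < s \<and> s < y \<and> f s = 0"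
proof -
  obtain s where "x \<le> s" "s \<le> y" "f s = 0" using IVT2'[of f y 0 x] assms by auto
  moreover have "s \<noteq> x" "s \<noteq> y" using calculation assms by auto
  ultimately show ?thesis by (intro exI[of _ s]) auto
qed

lemma eventually_sign_change:
  fixes f g :: "'p::t2_space \<Rightarrow> real"
  assumes "open U" "continuous_on U f" "continuous_on U g" "p \<in> U" "0 < f p" "g p < 0"
  shows "\<forall>\<^sub>F q in nhds p. q \<in> U \<and> 0 < f q \<and> g q < 0"
proof -
  have "(f \<longlongrightarrow> f p) (nhds p)" "(g \<longlongrightarrow> g p) (nhds p)"
    using assms continuous_on_eq_continuous_at[of U] unfolding continuous_at tendsto_at_iff_tendsto_nhds
    by blast+
  then have "\<forall>\<^sub>F q in nhds p. 0 < f q" "\<forall>\<^sub>F q in nhds p. g q < 0"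
    using order_tendstoD assms(5,6) by blast+
  then show ?thesis using eventually_nhds_in_open[OF assms(1,4)] by (intro eventually_conj)
qed

text \<open>A \<open>THE\<close> of a possibly empty predicate: meaningful only where \<open>F p\<close> has a root in
  \<open>(lo, hi)\<close>, which is unique when \<open>F p\<close> is decreasing.\<close>
definition decreasing_root :: "('p \<Rightarrow> real \<Rightarrow> real) \<Rightarrow> real \<Rightarrow> real \<Rightarrow> 'p \<Rightarrow> real" where
  "decreasing_root F lo hi p = (THE s. lo < s \<and> s < hi \<and> F p s = 0)"

lemma decreasing_root:
  assumes "lo < hi" and cont: "continuous_on {lo..hi} (F p)"
    and dec: "\<And>s1 s2. lo \<le> s1 \<Longrightarrow> s1 < s2 \<Longrightarrow> s2 \<le> hi \<Longrightarrow> F p s2 < F p s1"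
    and sign: "0 < F p lo" "F p hi < 0"
  shows "lo < decreasing_root F lo hi p \<and> decreasing_root F lo hi p < hi
      \<and> F p (decreasing_root F lo hi p) = 0"
    and "\<And>s. lo < s \<Longrightarrow> s < hi \<Longrightarrow> F p s = 0 \<Longrightarrow> decreasing_root F lo hi p = s"
proof -
  have unique: "s1 = s2" if "lo < s1" "s1 < hi" "lo < s2" "s2 < hi" "F p s1 = 0" "F p s2 = 0" for s1 s2
    using dec[of s1 s2] dec[of s2 s1] that by (cases s1 s2 rule: linorder_cases) auto
  obtain s where s: "lo < s" "s < hi" "F p s = 0" using IVT_strict_root[OF cont \<open>lo < hi\<close> sign] by blast
  show root: "lo < decreasing_root F lo hi p \<and> decreasing_root F lo hi p < hi
      \<and> F p (decreasing_root F lo hi p) = 0"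
    unfolding decreasing_root_def by (rule theI[of _ s]) (use s unique in blast)+
  show "decreasing_root F lo hi p = s'" if "lo < s'" "s' < hi" "F p s' = 0" for s'
    using unique[of "decreasing_root F lo hi p" s'] root that by blast
qed

context
  fixes U :: "'p::t2_space set" and F :: "'p \<Rightarrow> real \<Rightarrow> real" and lo hi :: real
  assumes U: "open U" and lo_hi: "lo < hi" and cont: "continuous_on (U \<times> {lo..hi}) (\<lambda>(p, s). F p s)"
    and dec: "\<And>p s1 s2. p \<in> U \<Longrightarrow> lo \<le> s1 \<Longrightarrow> s1 < s2 \<Longrightarrow> s2 \<le> hi \<Longrightarrow> F p s2 < F p s1"
begin

lemma eventually_decreasing_root_bounds:
  assumes "p \<in> U" "lo \<le> x" "x < y" "y \<le> hi" "0 < F p x" "F p y < 0"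
  shows "\<forall>\<^sub>F q in nhds p. q \<in> U \<and> x < decreasing_root F lo hi q \<and> decreasing_root F lo hi q < y"
proof -
  have "0 < F p lo" using assms dec[of p lo x] by (cases "lo = x") auto
  moreover have "F p hi < 0" using assms dec[of p y hi] by (cases "y = hi") auto
  ultimately have "\<forall>\<^sub>F q in nhds p. q \<in> U \<and> 0 < F q lo \<and> F q hi < 0"
    using assms by (intro eventually_sign_change U continuous_on_Times_slice_fst[OF cont]) auto
  moreover have "\<forall>\<^sub>F q in nhds p. q \<in> U \<and> 0 < F q x \<and> F q y < 0"
    using assms by (intro eventually_sign_change U continuous_on_Times_slice_fst[OF cont]) auto
  ultimately show ?thesis
  proof eventually_elim
    case (elim q)
    then have q: "q \<in> U" by simp
    have "continuous_on {x..y} (F q)" using continuous_on_Times_slice_snd[OF cont q] assms by auto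
    then obtain s where s: "x < s" "s < y" "F q s = 0"
      using IVT_strict_root[OF _ \<open>x < y\<close>] elim by blast
    from decreasing_root(2)[where F = F and p = q, OF lo_hi continuous_on_Times_slice_snd[OF cont q subset_refl] dec[OF q]] elim s assms
    have "decreasing_root F lo hi q = s" by auto
    then show ?case using q s by simp
  qed
qed

lemma isCont_decreasing_root:
  assumes "p \<in> U" "0 < F p lo" "F p hi < 0"
  shows "isCont (decreasing_root F lo hi) p"
  unfolding continuous_at
proof (rule tendstoI)
  fix e :: real assume "0 < e"
  define \<sigma> where "\<sigma> = decreasing_root F lo hi p"
  have \<sigma>: "lo < \<sigma>" "\<sigma> < hi" "F p \<sigma> = 0"
    using decreasing_root(1)[where F = F and p = p, OF lo_hi continuous_on_Times_slice_snd[OF cont assms(1) subset_refl] dec[OF assms(1)]]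
      assms unfolding \<sigma>_def by auto
  define e' where "e' = min (e/2) (min ((\<sigma> - lo)/2) ((hi - \<sigma>)/2))"
  have "e' \<le> e/2" "e' \<le> (\<sigma> - lo)/2" "e' \<le> (hi - \<sigma>)/2"
    unfolding e'_def by (rule min.cobounded1, (rule min.coboundedI2, rule min.cobounded1),
      (rule min.coboundedI2, rule min.cobounded2))
  moreover have "0 < e'" using \<open>0 < e\<close> \<sigma> unfolding e'_def by simp
  ultimately have e': "0 < e'" "e' < e" "lo < \<sigma> - e'" "\<sigma> + e' < hi"
    using \<open>0 < e\<close> \<sigma> by (auto simp: field_simps)
  then have "0 < F p (\<sigma> - e')" "F p (\<sigma> + e') < 0"
    using dec[of p "\<sigma> - e'" \<sigma>] dec[of p \<sigma> "\<sigma> + e'"] \<sigma> assms(1) by auto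
  then have "\<forall>\<^sub>F q in nhds p. q \<in> U \<and> \<sigma> - e' < decreasing_root F lo hi q \<and> decreasing_root F lo hi q < \<sigma> + e'"
    using e' assms(1) by (intro eventually_decreasing_root_bounds) auto
  then have "\<forall>\<^sub>F q in nhds p. dist (decreasing_root F lo hi q) \<sigma> < e"
    by eventually_elim (use e' in \<open>auto simp: dist_real_def abs_less_iff\<close>)
  then show "\<forall>\<^sub>F q in at p. dist (decreasing_root F lo hi q) (decreasing_root F lo hi p) < e"
    unfolding \<sigma>_def by (simp add: eventually_nhds_conv_at)
qed

end

lemma implicit_function_continuous:
  fixes F :: "'p::t2_space \<Rightarrow> real \<Rightarrow> real"
  assumes U: "open U" "p0 \<in> U" and a: "0 < a"
    and cont: "continuous_on (U \<times> {s0-a..s0+a}) (\<lambda>(p,s). F p s)"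
    and dec: "\<And>p s1 s2. p \<in> U \<Longrightarrow> s0-a \<le> s1 \<Longrightarrow> s1 < s2 \<Longrightarrow> s2 \<le> s0+a \<Longrightarrow> F p s2 < F p s1"
    and root0: "F p0 s0 = 0"
  obtains V \<sigma> where "open V" "p0 \<in> V" "V \<subseteq> U" "\<sigma> p0 = s0"
    "\<And>p. p \<in> V \<Longrightarrow> s0 - a < \<sigma> p \<and> \<sigma> p < s0 + a \<and> F p (\<sigma> p) = 0"
    "\<And>p. p \<in> V \<Longrightarrow> isCont \<sigma> p"
proof
  define V where "V = {p\<in>U. 0 < F p (s0-a) \<and> F p (s0+a) < 0}"
  have slice: "continuous_on {s0-a..s0+a} (F p)" if "p \<in> U" for p
    using continuous_on_Times_slice_snd[OF cont that subset_refl] .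
  have "s0 - a < s0 + a" using a by simp
  have near_V: "\<forall>\<^sub>F q in nhds p. q \<in> V" if "p \<in> V" for p
    using that a unfolding V_def
    by (auto intro!: eventually_sign_change U continuous_on_Times_slice_fst[OF cont])
  show "open V"
  proof (rule open_subopen[THEN iffD2], intro ballI)
    fix p assume "p \<in> V"
    have "\<exists>S. open S \<and> p \<in> S \<and> (\<forall>q\<in>S. q \<in> V)"
      using near_V[OF \<open>p \<in> V\<close>] by (simp only: eventually_nhds)
    then show "\<exists>T. open T \<and> p \<in> T \<and> T \<subseteq> V" by (simp add: subset_eq)
  qed
  show "p0 \<in> V" "V \<subseteq> U"
    unfolding V_def using dec[of p0 "s0-a" s0] dec[of p0 s0 "s0+a"] U a root0 by auto
  show "decreasing_root F (s0-a) (s0+a) p0 = s0"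
    using decreasing_root(2)[where F = F and p = p0, OF \<open>s0 - a < s0 + a\<close> slice[OF U(2)] dec[OF U(2)]] \<open>p0 \<in> V\<close> a root0
    unfolding V_def by auto
  show "s0 - a < decreasing_root F (s0-a) (s0+a) p \<and> decreasing_root F (s0-a) (s0+a) p < s0 + a
      \<and> F p (decreasing_root F (s0-a) (s0+a) p) = 0" if "p \<in> V" for p
    using decreasing_root(1)[where F = F and p = p, OF \<open>s0 - a < s0 + a\<close> slice dec] that
    unfolding V_def by auto
  show "isCont (decreasing_root F (s0-a) (s0+a)) p" if "p \<in> V" for p
    using isCont_decreasing_root[OF U(1) \<open>s0 - a < s0 + a\<close> cont dec] that unfolding V_def by auto
qed

text \<open>The arithmetic core of \<open>implicit_function_has_derivative\<close>: \<open>X\<close> is the error of the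
  linear approximation \<open>Lq\<close> to the increment \<open>X + Lq\<close> of the implicit function.\<close>
lemma implicit_increment_estimate:
  fixes c X Lq nq e e1 K :: real
  assumes "c \<noteq> 0" "0 \<le> nq" "0 < K" "0 < e"
    and X: "\<bar>c * X\<bar> \<le> e1 * (nq + \<bar>X + Lq\<bar>)" and Lq: "\<bar>Lq\<bar> \<le> K * nq"
    and e1: "e1 \<le> \<bar>c\<bar> / 2" "e1 \<le> e * \<bar>c\<bar> / (2 + 2*K)"
  shows "\<bar>X\<bar> \<le> e * nq"
proof -
  define S where "S = nq + \<bar>X + Lq\<bar>"
  have "0 \<le> S" unfolding S_def using \<open>0 \<le> nq\<close> by simp
  have "0 < \<bar>c\<bar>" using \<open>c \<noteq> 0\<close> by simp
  have ratio: "\<bar>X\<bar> \<le> (e1 / \<bar>c\<bar>) * S"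
    using X \<open>0 < \<bar>c\<bar>\<close> unfolding S_def by (simp add: abs_mult pos_le_divide_eq mult.commute)
  have "e1 / \<bar>c\<bar> \<le> 1/2" using e1(1) \<open>0 < \<bar>c\<bar>\<close> by (simp add: pos_divide_le_eq)
  then have "\<bar>X\<bar> \<le> (1/2) * S" using ratio mult_right_mono[OF _ \<open>0 \<le> S\<close>] by (meson order_trans)
  then have "S \<le> 2 * nq + 2 * (K * nq)"
    using Lq abs_triangle_ineq[of X Lq] unfolding S_def by argo
  then have S_bound: "S \<le> (2 + 2*K) * nq" by (simp add: algebra_simps)
  have "e1 / \<bar>c\<bar> \<le> e / (2 + 2*K)"
    using e1(2) \<open>0 < \<bar>c\<bar>\<close> \<open>0 < K\<close> by (simp add: pos_divide_le_eq)
  then have "\<bar>X\<bar> \<le> (e / (2 + 2*K)) * S" using ratio mult_right_mono[OF _ \<open>0 \<le> S\<close>] by (meson order_trans)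
  also have "\<dots> \<le> (e / (2 + 2*K)) * ((2 + 2*K) * nq)"
    using S_bound \<open>0 < e\<close> \<open>0 < K\<close> by (intro mult_left_mono) auto
  also have "\<dots> = e * nq" using \<open>0 < K\<close> by simp
  finally show ?thesis .
qed

lemma implicit_increment_linearization:
  fixes F :: "'p::real_normed_vector \<times> real \<Rightarrow> real" and \<sigma> :: "'p \<Rightarrow> real"
  assumes V: "open V" "p \<in> V" and cont: "isCont \<sigma> p"
    and zero: "\<And>q. q \<in> V \<Longrightarrow> F (q, \<sigma> q) = 0"
    and dF: "(F has_derivative F') (at (p, \<sigma> p))" and "0 < e1"
  shows "\<exists>d>0. \<forall>q. norm (q - p) < d \<longrightarrow>
    \<bar>F' (q - p, \<sigma> q - \<sigma> p)\<bar> \<le> e1 * (norm (q - p) + \<bar>\<sigma> q - \<sigma> p\<bar>)"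
proof -
  obtain d1 where d1: "d1 > 0" "\<And>y. norm (y - (p, \<sigma> p)) < d1 \<Longrightarrow>
      norm (F y - F (p, \<sigma> p) - F' (y - (p, \<sigma> p))) \<le> e1 * norm (y - (p, \<sigma> p))"
    using dF \<open>0 < e1\<close> unfolding has_derivative_at_alt by blast
  obtain d2 where d2: "d2 > 0" "\<And>q. dist q p < d2 \<Longrightarrow> dist (\<sigma> q) (\<sigma> p) < d1/2"
    using cont d1(1) unfolding continuous_at_eps_delta by (metis half_gt_zero)
  obtain d3 where d3: "d3 > 0" "ball p d3 \<subseteq> V" using V open_contains_ball by blast
  show ?thesis
  proof (intro exI[of _ "min (d1/2) (min d2 d3)"] conjI allI impI)
    show "0 < min (d1/2) (min d2 d3)" using d1 d2 d3 by auto
    fix q assume q: "norm (q - p) < min (d1/2) (min d2 d3)"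
    define ds where "ds = \<sigma> q - \<sigma> p"
    have "\<bar>ds\<bar> < d1/2" using d2(2)[of q] q unfolding ds_def by (simp add: dist_norm norm_minus_commute)
    have step: "norm ((q, \<sigma> q) - (p, \<sigma> p)) \<le> norm (q - p) + \<bar>ds\<bar>"
      unfolding ds_def by (simp add: norm_Pair)
        (metis norm_ge_zero real_norm_def sqrt_sum_squares_le_sum_abs abs_of_nonneg)
    then have "norm ((q, \<sigma> q) - (p, \<sigma> p)) < d1" using q \<open>\<bar>ds\<bar> < d1/2\<close> by linarith
    then have "norm (F (q, \<sigma> q) - F (p, \<sigma> p) - F' ((q, \<sigma> q) - (p, \<sigma> p)))
        \<le> e1 * norm ((q, \<sigma> q) - (p, \<sigma> p))"
      by (rule d1(2))
    moreover have "q \<in> V" using q d3(2) by (auto simp: dist_norm norm_minus_commute)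
    moreover have "(q, \<sigma> q) - (p, \<sigma> p) = (q - p, ds)" unfolding ds_def by simp
    ultimately have "\<bar>F' (q - p, ds)\<bar> \<le> e1 * norm ((q, \<sigma> q) - (p, \<sigma> p))"
      using zero[OF V(2)] zero[of q] by simp
    also have "\<dots> \<le> e1 * (norm (q - p) + \<bar>ds\<bar>)"
      using step \<open>0 < e1\<close> by (simp add: mult_left_mono)
    finally show "\<bar>F' (q - p, \<sigma> q - \<sigma> p)\<bar> \<le> e1 * (norm (q - p) + \<bar>\<sigma> q - \<sigma> p\<bar>)"
      unfolding ds_def .
  qed
qed

lemma implicit_function_has_derivative:
  fixes F :: "'p::real_normed_vector \<times> real \<Rightarrow> real" and \<sigma> :: "'p \<Rightarrow> real"
  assumes V: "open V" "p \<in> V" and cont: "isCont \<sigma> p"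
    and zero: "\<And>q. q \<in> V \<Longrightarrow> F (q, \<sigma> q) = 0"
    and dF: "(F has_derivative F') (at (p, \<sigma> p))" and c: "F' (0,1) \<noteq> 0"
  shows "(\<sigma> has_derivative (\<lambda>h. - F' (h,0) / F' (0,1))) (at p)"
proof -
  define c where "c = F' (0,1)"
  define L where "L h = - F' (h,0) / c" for h
  have F'_lin: "bounded_linear F'" using dF has_derivative_bounded_linear by blast
  have "bounded_linear (\<lambda>h::'p. F' (h, 0))"
    using bounded_linear_compose[OF F'_lin bounded_linear_Pair[OF bounded_linear_ident bounded_linear_zero]] .
  then have "bounded_linear (\<lambda>h. - (F' (h, 0) / c))"
    by (intro bounded_linear_minus bounded_linear_compose[OF bounded_linear_divide])
  then have L_lin: "bounded_linear L" unfolding L_def by simp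
  then obtain K where K: "K > 0" "\<And>h. norm (L h) \<le> norm h * K" using bounded_linear.pos_bounded by blast
  have F'_split: "F' (h, k) = c * (k - L h)" for h k
    using bounded_linear_Pair_split[OF F'_lin, of h k] c unfolding L_def c_def by (simp add: field_simps)
  have "\<exists>d>0. \<forall>q. norm (q - p) < d \<longrightarrow> norm (\<sigma> q - \<sigma> p - L (q - p)) \<le> e * norm (q - p)"
    if "e > 0" for e
  proof -
    define e1 where "e1 = min (\<bar>c\<bar>/2) (e * \<bar>c\<bar> / (2 + 2*K))"
    have "e1 \<le> \<bar>c\<bar>/2" "e1 \<le> e * \<bar>c\<bar> / (2 + 2*K)"
      unfolding e1_def by (rule min.cobounded1, rule min.cobounded2)
    moreover have "e1 > 0" using c \<open>e > 0\<close> K(1) unfolding e1_def c_def by simp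
    ultimately have e1: "e1 > 0" "e1 \<le> \<bar>c\<bar>/2" "e1 \<le> e * \<bar>c\<bar> / (2 + 2*K)" by blast+
    obtain d where d: "d > 0" "\<And>q. norm (q - p) < d \<Longrightarrow>
        \<bar>F' (q - p, \<sigma> q - \<sigma> p)\<bar> \<le> e1 * (norm (q - p) + \<bar>\<sigma> q - \<sigma> p\<bar>)"
      using implicit_increment_linearization[OF V cont zero dF e1(1)] by blast
    have "\<bar>\<sigma> q - \<sigma> p - L (q - p)\<bar> \<le> e * norm (q - p)" if q: "norm (q - p) < d" for q
    proof (rule implicit_increment_estimate[rotated 4])
      show "\<bar>c * (\<sigma> q - \<sigma> p - L (q - p))\<bar>
          \<le> e1 * (norm (q - p) + \<bar>(\<sigma> q - \<sigma> p - L (q - p)) + L (q - p)\<bar>)"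
        using d(2)[OF q] unfolding F'_split by simp
      show "\<bar>L (q - p)\<bar> \<le> K * norm (q - p)" using K(2)[of "q - p"] by (simp add: mult.commute)
    qed (use c K(1) \<open>e > 0\<close> e1 in \<open>simp_all add: c_def\<close>)
    then show ?thesis using d(1) by auto
  qed
  then have "(\<sigma> has_derivative L) (at p)" using L_lin unfolding has_derivative_at_alt by blast
  then show ?thesis unfolding L_def c_def .
qed

section \<open>Regularity of the support map\<close>

locale std_tube =
  fixes c0 :: "real \<Rightarrow> complex" and \<gamma> :: "real \<Rightarrow> real \<Rightarrow> complex" and \<Gamma> :: "real \<Rightarrow> real \<Rightarrow> complex"
    and D :: "real \<times> real \<Rightarrow> ((real \<times> real) \<Rightarrow>\<^sub>L complex)"
    and D2 :: "real \<times> real \<Rightarrow> ((real \<times> real) \<Rightarrow>\<^sub>L ((real \<times> real) \<Rightarrow>\<^sub>L complex))"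
    and Dc :: "real \<Rightarrow> (real \<Rightarrow>\<^sub>L complex)"
    and Dc2 :: "real \<Rightarrow> (real \<Rightarrow>\<^sub>L (real \<Rightarrow>\<^sub>L complex))"
  assumes c0_deriv: "\<And>w. w \<in> {-1<..<1} \<Longrightarrow> (c0 has_derivative blinfun_apply (Dc w)) (at w)"
    and Dc_deriv: "\<And>w. w \<in> {-1<..<1} \<Longrightarrow> (Dc has_derivative blinfun_apply (Dc2 w)) (at w)"
    and gamma_deriv: "\<And>x. x \<in> UNIV \<times> {-1<..<1} \<Longrightarrow>
      ((\<lambda>(\<theta>, z). \<gamma> z \<theta>) has_derivative blinfun_apply (D x)) (at x)"
    and D_deriv: "\<And>x. x \<in> UNIV \<times> {-1<..<1} \<Longrightarrow> (D has_derivative blinfun_apply (D2 x)) (at x)"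
    and D2_cont: "continuous_on (UNIV \<times> {-1<..<1}) D2"
    and oval: "\<And>w. w \<in> {-1<..<1} \<Longrightarrow> oval_param (\<gamma> w)"
    and support: "\<And>w. w \<in> {-1<..<1} \<Longrightarrow> support_param (\<lambda>t. \<Gamma> t w) (hsec (tube c0 \<gamma>) w)"
begin

definition gamma_t :: "real \<Rightarrow> real \<Rightarrow> complex" where
  "gamma_t w s = blinfun_apply (D (s, w)) (1, 0)"
definition gamma_tt :: "real \<Rightarrow> real \<Rightarrow> complex" where
  "gamma_tt w s = blinfun_apply (blinfun_apply (D2 (s, w)) (1, 0)) (1, 0)"

text \<open>The support map is obtained by solving \<open>height_slope (t, w) s = 0\<close> for \<open>s\<close>.\<close>
definition height_slope :: "real \<times> real \<Rightarrow> real \<Rightarrow> real" where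
  "height_slope x s = gamma_t (snd x) s \<bullet> cis (fst x)"

lemma gamma_has_vector_derivative:
  "w \<in> {-1<..<1} \<Longrightarrow> (\<gamma> w has_vector_derivative gamma_t w s) (at s)"
  using has_derivative_partials(1)[OF gamma_deriv[of "(s, w)"]] unfolding gamma_t_def by simp

lemma gamma_t_has_vector_derivative:
  assumes w: "w \<in> {-1<..<1}"
  shows "(gamma_t w has_vector_derivative gamma_tt w s) (at s)"
proof -
  have "((\<lambda>s. D (s, w)) has_vector_derivative blinfun_apply (D2 (s, w)) (1, 0)) (at s)"
    using has_derivative_partials(1)[OF D_deriv[of "(s, w)"]] w by simp
  then have "((\<lambda>s. blinfun_apply (D (s, w)) (1, 0)) has_derivative
      (\<lambda>h. blinfun_apply (h *\<^sub>R blinfun_apply (D2 (s, w)) (1, 0)) (1, 0))) (at s)"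
    unfolding has_vector_derivative_def by (auto intro!: derivative_eq_intros)
  then show ?thesis
    unfolding has_vector_derivative_def gamma_t_def[abs_def] gamma_tt_def by (simp add: blinfun.scaleR_left)
qed

lemma curvature_nonzero:
  assumes w: "w \<in> {-1<..<1}"
  shows "gamma_t w s \<noteq> 0" "Im (cnj (gamma_t w s) * gamma_tt w s) \<noteq> 0"
proof -
  have "(\<lambda>s. vector_derivative (\<gamma> w) (at s)) = gamma_t w"
    using gamma_has_vector_derivative[OF w] vector_derivative_at by blast
  moreover have "vector_derivative (gamma_t w) (at s) = gamma_tt w s"
    using gamma_t_has_vector_derivative[OF w] by (rule vector_derivative_at)
  ultimately show "gamma_t w s \<noteq> 0" "Im (cnj (gamma_t w s) * gamma_tt w s) \<noteq> 0"
    using oval[OF w] unfolding oval_param_def by metis+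
qed

lemma height_has_real_derivative:
  "w \<in> {-1<..<1} \<Longrightarrow> ((\<lambda>s. \<gamma> w s \<bullet> cis t) has_real_derivative height_slope (t, w) s) (at s)"
  using gamma_has_vector_derivative[of w s]
  unfolding has_vector_derivative_def has_field_derivative_def height_slope_def
  by (auto intro!: derivative_eq_intros simp: mult_commute_abs)

lemma height_slope_has_real_derivative:
  "snd x \<in> {-1<..<1} \<Longrightarrow> (height_slope x has_real_derivative gamma_tt (snd x) s \<bullet> cis (fst x)) (at s)"
  using gamma_t_has_vector_derivative[of "snd x" s]
  unfolding has_vector_derivative_def has_field_derivative_def height_slope_def[abs_def]
  by (auto intro!: derivative_eq_intros simp: mult_commute_abs)

lemma height_nondegenerate:
  assumes "w \<in> {-1<..<1}" "height_slope (t, w) s = 0"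
  shows "gamma_tt w s \<bullet> cis t \<noteq> 0"
  using inner_cis_eq_0_imp_parallel[of "gamma_t w s" t "gamma_tt w s"] curvature_nonzero[OF assms(1)]
    assms(2) unfolding height_slope_def by auto

lemma hsec_tube: "w \<in> {-1<..<1} \<Longrightarrow> hsec (tube c0 \<gamma>) w = range (\<lambda>s. c0 w + \<gamma> w s)"
  unfolding hsec_def tube_def by auto

lemma support_curve_Gamma: "w \<in> {-1<..<1} \<Longrightarrow> support_curve (\<lambda>t. \<Gamma> t w)"
  using support by (rule support_param_support_curve)

lemma range_Gamma:
  assumes w: "w \<in> {-1<..<1}"
  shows "range (\<lambda>t. \<Gamma> t w) = range (\<lambda>s. c0 w + \<gamma> w s)"
proof -
  have "\<forall>t. \<Gamma> (t + 2*pi) w = \<Gamma> t w" "(\<lambda>t. \<Gamma> t w) ` {0..<2*pi} = hsec (tube c0 \<gamma>) w"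
    using support[OF w] unfolding support_param_def by auto
  then show ?thesis using range_periodic hsec_tube[OF w] by metis
qed

lemma Gamma_tangent_direction:
  assumes "w \<in> {-1<..<1}" "((\<lambda>t. \<Gamma> t w) has_vector_derivative d) (at s)"
  shows "d = complex_of_real (cmod d) * \<i> * exp (\<i> * complex_of_real s)"
  using support[OF assms(1)] vector_derivative_unique_at[OF assms(2)] unfolding support_param_def by metis

lemma height_max_exists:
  assumes w: "w \<in> {-1<..<1}"
  obtains s0 where "\<And>s. \<gamma> w s \<bullet> cis t \<le> \<gamma> w s0 \<bullet> cis t"
proof -
  interpret support_curve "\<lambda>t. \<Gamma> t w" using support_curve_Gamma[OF w] .
  obtain s0 where s0: "\<Gamma> t w = c0 w + \<gamma> w s0" using range_Gamma[OF w] by (metis rangeI imageE)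
  have "\<gamma> w s \<bullet> cis t \<le> \<gamma> w s0 \<bullet> cis t" for s
  proof -
    obtain u where u: "c0 w + \<gamma> w s = \<Gamma> u w" using range_Gamma[OF w] by (metis rangeI imageE)
    show ?thesis using height_le_support[of u t] unfolding u[symmetric] s0 by (simp add: inner_add_left)
  qed
  then show ?thesis using that by blast
qed

lemma support_point_critical:
  assumes w: "w \<in> {-1<..<1}" and max: "\<And>s. \<gamma> w s \<bullet> cis t \<le> \<gamma> w s0 \<bullet> cis t"
  shows "height_slope (t, w) s0 = 0" "gamma_tt w s0 \<bullet> cis t < 0"
proof -
  show slope0: "height_slope (t, w) s0 = 0"
    by (rule DERIV_local_max[OF height_has_real_derivative[OF w], of 1]) (use max in auto)
  show "gamma_tt w s0 \<bullet> cis t < 0"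
  proof (rule ccontr)
    assume "\<not> ?thesis"
    then have "0 < gamma_tt w s0 \<bullet> cis t" using height_nondegenerate[OF w slope0] by simp
    then obtain d where d: "d > 0" "\<And>h. 0 < h \<Longrightarrow> h < d \<Longrightarrow> 0 < height_slope (t, w) (s0 + h)"
      using DERIV_pos_inc_right[OF height_slope_has_real_derivative[of "(t, w)" s0]] w slope0 by auto
    have cont: "continuous_on {s0..s0 + d/2} (\<lambda>s. \<gamma> w s \<bullet> cis t)"
      using height_has_real_derivative[OF w] by (meson DERIV_isCont continuous_at_imp_continuous_on)
    have "\<gamma> w s0 \<bullet> cis t < \<gamma> w (s0 + d/2) \<bullet> cis t"
    proof (rule DERIV_pos_imp_increasing_open[OF _ _ cont])
      show "s0 < s0 + d/2" using d by simp
      fix x assume "s0 < x" "x < s0 + d/2"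
      then show "\<exists>y. ((\<lambda>s. \<gamma> w s \<bullet> cis t) has_real_derivative y) (at x) \<and> 0 < y"
        using height_has_real_derivative[OF w] d(2)[of "x - s0"] by force
    qed
    then show False using max by (meson not_le)
  qed
qed

lemma open_strip: "open (UNIV \<times> {-1<..<1::real} :: (real \<times> real) set)"
  by (simp add: open_Times)

lemma isCont_D: "x \<in> UNIV \<times> {-1<..<1} \<Longrightarrow> isCont D x"
  using D_deriv has_derivative_continuous by blast

lemma isCont_D2: "x \<in> UNIV \<times> {-1<..<1} \<Longrightarrow> isCont D2 x"
  using D2_cont open_strip continuous_on_eq_continuous_at by blast

lemma isCont_Dc: "w \<in> {-1<..<1} \<Longrightarrow> isCont Dc w"
  using Dc_deriv has_derivative_continuous by blast

definition slope_deriv :: "(real \<times> real) \<times> real \<Rightarrow> (real \<times> real) \<times> real \<Rightarrow> real" where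
  "slope_deriv y k =
  blinfun_apply (blinfun_apply (D2 (snd y, snd (fst y))) (snd k, snd (fst k))) (1,0) \<bullet> cis (fst (fst y))
   + gamma_t (snd (fst y)) (snd y) \<bullet> (fst (fst k) *\<^sub>R (\<i> * cis (fst (fst y))))"

lemma height_slope_has_derivative:
  assumes "snd x \<in> {-1<..<1}"
  shows "((\<lambda>(x, s). height_slope x s) has_derivative slope_deriv (x, s)) (at (x, s))"
proof -
  have dD: "((\<lambda>y. D (snd y, snd (fst y))) has_derivative
      (\<lambda>k. blinfun_apply (D2 (s, snd x)) (snd k, snd (fst k)))) (at (x, s))"
    by (rule has_derivative_compose[of "\<lambda>y. (snd y, snd (fst y))" "\<lambda>k. (snd k, snd (fst k))"])
       (auto intro!: derivative_eq_intros D_deriv assms)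
  have eq: "(\<lambda>(x, s). height_slope x s) = (\<lambda>y. blinfun_apply (D (snd y, snd (fst y))) (1,0) \<bullet> cis (fst (fst y)))"
    unfolding height_slope_def gamma_t_def by auto
  show ?thesis unfolding eq slope_deriv_def gamma_t_def
    by (rule derivative_eq_intros dD | simp)+ (auto simp: fun_eq_iff algebra_simps)
qed

lemma slope_deriv_s: "slope_deriv y ((0,0),1) = gamma_tt (snd (fst y)) (snd y) \<bullet> cis (fst (fst y))"
  unfolding slope_deriv_def gamma_tt_def by simp

lemma isCont_curvature_term:
  assumes "snd (fst y) \<in> {-1<..<1}"
  shows "isCont (\<lambda>y. gamma_tt (snd (fst y)) (snd y) \<bullet> cis (fst (fst y))) y"
proof -
  have "isCont (\<lambda>y. D2 (snd y, snd (fst y))) y"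
    by (rule continuous_at_compose[of y "\<lambda>y. (snd y, snd (fst y))" D2, unfolded o_def])
       (auto intro!: continuous_intros isCont_D2 assms)
  then show ?thesis unfolding gamma_tt_def cis_conv_exp by (intro continuous_intros)
qed

lemma Gamma_eq_local_max:
  assumes w: "w \<in> {-1<..<1}" and \<delta>: "0 < \<delta>" "\<delta> \<le> pi"
    and locmax: "\<And>s. \<bar>s - \<sigma>\<bar> < \<delta> \<Longrightarrow> \<gamma> w s \<bullet> cis t \<le> \<gamma> w \<sigma> \<bullet> cis t"
  shows "\<Gamma> t w = c0 w + \<gamma> w \<sigma>"
proof -
  interpret G: support_curve "\<lambda>t. \<Gamma> t w" using support_curve_Gamma[OF w] .
  have per: "\<forall>t. \<gamma> w (t + 2*pi) = \<gamma> w t" and inj: "inj_on (\<gamma> w) {0..<2*pi}"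
    using oval[OF w] unfolding oval_param_def by auto
  have "continuous_on UNIV (\<gamma> w)"
    using gamma_has_vector_derivative[OF w] has_vector_derivative_continuous
    by (blast intro: continuous_at_imp_continuous_on)
  then obtain \<eta> where \<eta>: "\<eta> > 0"
    "\<And>s. dist (\<gamma> w s) (\<gamma> w \<sigma>) < \<eta> \<Longrightarrow> \<exists>k::int. \<bar>s + 2*pi * of_int k - \<sigma>\<bar> < \<delta>"
    using periodic_inj_near_preimage[OF _ per inj \<delta>] by blast
  obtain u where u: "c0 w + \<gamma> w \<sigma> = \<Gamma> u w" using range_Gamma[OF w] by (metis rangeI imageE)
  obtain d where d: "d > 0" "\<And>u'. dist u' u < d \<Longrightarrow> dist (\<Gamma> u' w) (\<Gamma> u w) < \<eta>"
    using G.continuous[of u] \<eta>(1) unfolding continuous_at_eps_delta by blast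
  have "\<Gamma> u' w \<bullet> cis t \<le> \<Gamma> u w \<bullet> cis t" if "\<bar>u' - u\<bar> < d" for u'
  proof -
    obtain s' where s': "\<Gamma> u' w = c0 w + \<gamma> w s'" using range_Gamma[OF w] by (metis rangeI imageE)
    have "dist (\<gamma> w s') (\<gamma> w \<sigma>) < \<eta>"
      using d(2)[of u'] that unfolding s' u[symmetric] by (simp add: dist_real_def)
    then obtain k :: int where "\<bar>s' + 2*pi * of_int k - \<sigma>\<bar> < \<delta>" using \<eta>(2) by blast
    then have "\<gamma> w s' \<bullet> cis t \<le> \<gamma> w \<sigma> \<bullet> cis t"
      using locmax periodic_shift_int[OF per, of s' k] by metis
    then show ?thesis unfolding s' u[symmetric] by (simp add: inner_add_left)
  qed
  then obtain k :: int where "u = t + 2*pi * of_int k"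
    using G.local_max_height_imp_support[OF d(1)] by blast
  then show ?thesis using u G.shift_int by simp
qed

lemma height_slope_decreasing:
  assumes w: "snd x \<in> {-1<..<1}"
    and neg: "\<And>s. s1 \<le> s \<Longrightarrow> s \<le> s2 \<Longrightarrow> gamma_tt (snd x) s \<bullet> cis (fst x) < 0" and "s1 < s2"
  shows "height_slope x s2 < height_slope x s1"
proof (rule DERIV_neg_imp_decreasing[OF \<open>s1 < s2\<close>])
  fix s assume "s1 \<le> s" "s \<le> s2"
  then show "\<exists>y. (height_slope x has_real_derivative y) (at s) \<and> y < 0"
    using height_slope_has_real_derivative[OF w, of s] neg by blast
qed

lemma continuous_on_height_slope:
  assumes "U \<subseteq> UNIV \<times> {-1<..<1}"
  shows "continuous_on (U \<times> J) (\<lambda>(x, s). height_slope x s)"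
proof (intro continuous_at_imp_continuous_on ballI)
  fix y assume "y \<in> U \<times> J"
  then obtain x s where y: "y = (x, s)" "snd x \<in> {-1<..<1}" using assms by auto
  show "isCont (\<lambda>(x, s). height_slope x s) y"
    unfolding y(1) by (rule has_derivative_continuous[OF height_slope_has_derivative[OF y(2)]])
qed

lemma curvature_negative_near:
  assumes z: "z \<in> {-1<..<1}" and neg: "gamma_tt z s0 \<bullet> cis t0 < 0"
  obtains U a where "open U" "(t0, z) \<in> U" "U \<subseteq> UNIV \<times> {-1<..<1}" "0 < a" "a \<le> 1"
    "\<And>x s. x \<in> U \<Longrightarrow> \<bar>s - s0\<bar> \<le> a \<Longrightarrow> gamma_tt (snd x) s \<bullet> cis (fst x) < 0"
proof -
  define G where "G y = gamma_tt (snd (fst y)) (snd y) \<bullet> cis (fst (fst y))" for y :: "(real \<times> real) \<times> real"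
  have "isCont G ((t0, z), s0)" unfolding G_def[abs_def] using isCont_curvature_term z by simp
  then have "(G \<longlongrightarrow> G ((t0, z), s0)) (nhds ((t0, z), s0))"
    unfolding continuous_at tendsto_at_iff_tendsto_nhds .
  then have "\<forall>\<^sub>F y in nhds ((t0, z), s0). G y < 0"
    using order_tendstoD(2) neg unfolding G_def by simp
  then obtain r where r: "0 < r" "\<And>y. dist y ((t0, z), s0) < r \<Longrightarrow> G y < 0"
    unfolding eventually_nhds_metric by blast
  define a where "a = min (r/2) 1"
  define U where "U = ball (t0, z) (r/2) \<inter> (UNIV \<times> {-1<..<1})"
  have "gamma_tt (snd x) s \<bullet> cis (fst x) < 0" if "x \<in> U" "\<bar>s - s0\<bar> \<le> a" for x s
  proof -
    have "dist (x, s) ((t0, z), s0) \<le> dist x (t0, z) + dist s s0" by (rule dist_Pair_le)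
    also have "\<dots> < r" using that unfolding U_def a_def by (auto simp: dist_real_def dist_commute)
    finally show ?thesis using r(2)[of "(x, s)"] unfolding G_def by simp
  qed
  moreover have "open U" "(t0, z) \<in> U" using r z open_strip unfolding U_def by auto
  ultimately show ?thesis using that[of U a] r(1) unfolding a_def U_def by auto
qed

lemma Gamma_eq_at_slope_root:
  assumes w: "snd x \<in> {-1<..<1}" and a: "0 < a" "a \<le> 1"
    and dec: "\<And>s1 s2. s0 - a \<le> s1 \<Longrightarrow> s1 < s2 \<Longrightarrow> s2 \<le> s0 + a \<Longrightarrow> height_slope x s2 < height_slope x s1"
    and root: "height_slope x \<sigma> = 0" and near: "\<bar>\<sigma> - s0\<bar> < a/2"
  shows "\<Gamma> (fst x) (snd x) = c0 (snd x) + \<gamma> (snd x) \<sigma>"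
proof (rule Gamma_eq_local_max[OF w])
  show "0 < a/2" "a/2 \<le> pi" using a pi_gt3 by auto
  fix s assume s: "\<bar>s - \<sigma>\<bar> < a/2"
  have deriv: "((\<lambda>s. \<gamma> (snd x) s \<bullet> cis (fst x)) has_real_derivative height_slope x s') (at s')" for s'
    using height_has_real_derivative[OF w, of "fst x" s'] by simp
  have "s - \<sigma> < a/2 \<and> - (s - \<sigma>) < a/2" "\<sigma> - s0 < a/2 \<and> - (\<sigma> - s0) < a/2"
    using s near unfolding abs_less_iff .
  then show "\<gamma> (snd x) s \<bullet> cis (fst x) \<le> \<gamma> (snd x) \<sigma> \<bullet> cis (fst x)"
    by (intro le_at_zero_of_decreasing_derivative[where lo = "s0 - a" and hi = "s0 + a", OF deriv dec] root)
      linarith+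
qed

lemma support_root_local:
  assumes z: "z \<in> {-1<..<1}"
  obtains N \<sigma> where "open N" "(t0, z) \<in> N" "N \<subseteq> UNIV \<times> {-1<..<1}"
    "\<And>x. x \<in> N \<Longrightarrow> \<Gamma> (fst x) (snd x) = c0 (snd x) + \<gamma> (snd x) (\<sigma> x)"
    "\<And>x. x \<in> N \<Longrightarrow> height_slope x (\<sigma> x) = 0"
    "\<And>x. x \<in> N \<Longrightarrow> gamma_tt (snd x) (\<sigma> x) \<bullet> cis (fst x) < 0"
    "\<And>x. x \<in> N \<Longrightarrow> isCont \<sigma> x"
proof -
  obtain s0 where s0: "\<And>s. \<gamma> z s \<bullet> cis t0 \<le> \<gamma> z s0 \<bullet> cis t0"
    using height_max_exists[OF z] by blast
  note crit = support_point_critical[OF z s0]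
  obtain U a where U: "open U" "(t0, z) \<in> U" "U \<subseteq> UNIV \<times> {-1<..<1}" "0 < a" "a \<le> 1"
    and neg: "\<And>x s. x \<in> U \<Longrightarrow> \<bar>s - s0\<bar> \<le> a \<Longrightarrow> gamma_tt (snd x) s \<bullet> cis (fst x) < 0"
    using curvature_negative_near[OF z crit(2)] by blast
  have strip: "snd x \<in> {-1<..<1}" if "x \<in> U" for x using that U(3) by auto
  have dec: "height_slope x s2 < height_slope x s1"
    if "x \<in> U" "s0-a \<le> s1" "s1 < s2" "s2 \<le> s0+a" for x s1 s2
    using height_slope_decreasing[OF strip[OF that(1)] _ that(3)] neg[OF that(1)] that by auto
  have cont: "continuous_on (U \<times> {s0-a..s0+a}) (\<lambda>(x, s). height_slope x s)"
    using continuous_on_height_slope U(3) by blast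
  obtain V \<sigma> where V: "open V" "(t0, z) \<in> V" "V \<subseteq> U" "\<sigma> (t0, z) = s0"
      "\<And>x. x \<in> V \<Longrightarrow> s0 - a < \<sigma> x \<and> \<sigma> x < s0 + a \<and> height_slope x (\<sigma> x) = 0"
      "\<And>x. x \<in> V \<Longrightarrow> isCont \<sigma> x"
    using implicit_function_continuous[where F = height_slope, OF U(1,2,4) cont dec crit(1)] by blast
  \<comment> \<open>Shrink \<open>V\<close> so that \<open>\<sigma> x\<close> stays in the middle half of \<open>[s0 - a, s0 + a]\<close>: there it is a
    local maximum of the height, hence the support point.\<close>
  have "(\<sigma> \<longlongrightarrow> \<sigma> (t0, z)) (nhds (t0, z))"
    using V(6)[OF V(2)] unfolding continuous_at tendsto_at_iff_tendsto_nhds .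
  then have "(\<sigma> \<longlongrightarrow> s0) (nhds (t0, z))" unfolding V(4) .
  then have "\<forall>\<^sub>F x in nhds (t0, z). dist (\<sigma> x) s0 < a/2" using U(4) by (intro tendstoD) simp_all
  with eventually_nhds_in_open[OF V(1,2)]
  have "\<forall>\<^sub>F x in nhds (t0, z). x \<in> V \<and> dist (\<sigma> x) s0 < a/2" by (rule eventually_conj)
  then obtain N where N: "open N" "(t0, z) \<in> N" "\<And>x. x \<in> N \<Longrightarrow> x \<in> V \<and> \<bar>\<sigma> x - s0\<bar> < a/2"
    unfolding eventually_nhds dist_real_def by blast
  have "\<Gamma> (fst x) (snd x) = c0 (snd x) + \<gamma> (snd x) (\<sigma> x)" if "x \<in> N" for x
  proof (rule Gamma_eq_at_slope_root[OF _ U(4,5)])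
    have "x \<in> U" using N(3)[OF that] V(3) by auto
    then show "snd x \<in> {-1<..<1}" "\<And>s1 s2. s0 - a \<le> s1 \<Longrightarrow> s1 < s2 \<Longrightarrow> s2 \<le> s0 + a
        \<Longrightarrow> height_slope x s2 < height_slope x s1"
      using strip dec by auto
    show "height_slope x (\<sigma> x) = 0" "\<bar>\<sigma> x - s0\<bar> < a/2" using V(5) N(3)[OF that] by auto
  qed
  moreover have "gamma_tt (snd x) (\<sigma> x) \<bullet> cis (fst x) < 0" if "x \<in> N" for x
  proof (rule neg)
    show "x \<in> U" using N(3)[OF that] V(3) by auto
    show "\<bar>\<sigma> x - s0\<bar> \<le> a" using N(3)[OF that] U(4) by linarith
  qed
  moreover have "N \<subseteq> UNIV \<times> {-1<..<1}" using N(3) V(3) U(3) by blast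
  ultimately show ?thesis using that[of N \<sigma>] N V(5,6) by blast
qed

lemma support_root_has_derivative:
  assumes N: "open N" "x \<in> N" "N \<subseteq> UNIV \<times> {-1<..<1}"
    and root: "\<And>x. x \<in> N \<Longrightarrow> height_slope x (\<sigma> x) = 0"
    and neg: "gamma_tt (snd x) (\<sigma> x) \<bullet> cis (fst x) < 0" and cont: "isCont \<sigma> x"
  shows "(\<sigma> has_derivative (\<lambda>h. - slope_deriv (x, \<sigma> x) (h, 0) / slope_deriv (x, \<sigma> x) ((0,0),1))) (at x)"
proof -
  have "(\<sigma> has_derivative (\<lambda>h. - slope_deriv (x, \<sigma> x) (h, 0) / slope_deriv (x, \<sigma> x) (0, 1))) (at x)"
  proof (rule implicit_function_has_derivative[OF N(1,2) cont])
    show "(\<lambda>(x, s). height_slope x s) (q, \<sigma> q) = 0" if "q \<in> N" for q using root[OF that] by simp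
    show "((\<lambda>(x, s). height_slope x s) has_derivative slope_deriv (x, \<sigma> x)) (at (x, \<sigma> x))"
      using height_slope_has_derivative N(2,3) by auto
    show "slope_deriv (x, \<sigma> x) (0, 1) \<noteq> 0" using neg slope_deriv_s by (simp add: zero_prod_def)
  qed
  then show ?thesis by (simp add: zero_prod_def)
qed

lemma Gamma_C1:
  assumes z: "z \<in> {-1<..<1}"
  obtains N DG where "open N" "(t0, z) \<in> N" "N \<subseteq> UNIV \<times> {-1<..<1}"
    "\<And>x. x \<in> N \<Longrightarrow> ((\<lambda>x. \<Gamma> (fst x) (snd x)) has_derivative DG x) (at x)"
    "\<And>h. isCont (\<lambda>x. DG x h) (t0, z)"
proof -
  obtain N \<sigma> where N: "open N" "(t0, z) \<in> N" "N \<subseteq> UNIV \<times> {-1<..<1}"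
    and Gamma: "\<And>x. x \<in> N \<Longrightarrow> \<Gamma> (fst x) (snd x) = c0 (snd x) + \<gamma> (snd x) (\<sigma> x)"
    and root: "\<And>x. x \<in> N \<Longrightarrow> height_slope x (\<sigma> x) = 0"
    and neg: "\<And>x. x \<in> N \<Longrightarrow> gamma_tt (snd x) (\<sigma> x) \<bullet> cis (fst x) < 0"
    and cont: "\<And>x. x \<in> N \<Longrightarrow> isCont \<sigma> x"
    using support_root_local[OF z] by blast
  define \<sigma>' where "\<sigma>' x h = - slope_deriv (x, \<sigma> x) (h, 0) / slope_deriv (x, \<sigma> x) ((0,0),1)" for x h
  have \<sigma>': "(\<sigma> has_derivative \<sigma>' x) (at x)" if "x \<in> N" for x
    unfolding \<sigma>'_def using support_root_has_derivative[OF N(1) that N(3) root neg cont] that by blast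
  define DG where "DG x h = Dc (snd x) (snd h) + D (\<sigma> x, snd x) (\<sigma>' x h, snd h)" for x h
  have "((\<lambda>x. \<Gamma> (fst x) (snd x)) has_derivative DG x) (at x)" if x: "x \<in> N" for x
  proof -
    have w: "snd x \<in> {-1<..<1}" using N(3) x by auto
    have "((\<lambda>x. c0 (snd x)) has_derivative (\<lambda>h. Dc (snd x) (snd h))) (at x)"
      by (rule has_derivative_compose[of snd snd]) (auto intro!: derivative_eq_intros c0_deriv w)
    moreover have "((\<lambda>x. (\<lambda>(\<theta>, z). \<gamma> z \<theta>) (\<sigma> x, snd x)) has_derivative
        (\<lambda>h. D (\<sigma> x, snd x) (\<sigma>' x h, snd h))) (at x)"
      by (rule has_derivative_compose[of "\<lambda>x. (\<sigma> x, snd x)" "\<lambda>h. (\<sigma>' x h, snd h)"])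
         (auto intro!: derivative_eq_intros \<sigma>'[OF x] gamma_deriv w)
    ultimately have "((\<lambda>x. c0 (snd x) + \<gamma> (snd x) (\<sigma> x)) has_derivative DG x) (at x)"
      unfolding DG_def using has_derivative_add by fastforce
    then show ?thesis
      by (rule has_derivative_transform_within_open[OF _ N(1) x]) (use Gamma in auto)
  qed
  moreover have "isCont (\<lambda>x. DG x h) (t0, z)" for h
  proof -
    have z0: "(\<sigma> (t0, z), z) \<in> UNIV \<times> {-1<..<1}" using z by auto
    have c\<sigma>: "isCont (\<lambda>x. (\<sigma> x, snd x)) (t0, z)" using cont[OF N(2)] by (intro continuous_intros)
    have cD: "isCont (\<lambda>x. D (\<sigma> x, snd x)) (t0, z)" "isCont (\<lambda>x. D2 (\<sigma> x, snd x)) (t0, z)"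
      using continuous_at_compose[OF c\<sigma>, of D] continuous_at_compose[OF c\<sigma>, of D2]
        isCont_D isCont_D2 z0 by (auto simp: o_def)
    have cDc: "isCont (\<lambda>x. Dc (snd x)) (t0, z)"
      using continuous_at_compose[of "(t0, z)" snd Dc] isCont_Dc[OF z] by (auto simp: o_def)
    have cslope: "isCont (\<lambda>x. slope_deriv (x, \<sigma> x) k) (t0, z)" for k
      unfolding slope_deriv_def gamma_t_def fst_conv snd_conv cis_conv_exp by (intro continuous_intros cD)
    have "slope_deriv ((t0, z), \<sigma> (t0, z)) ((0,0),1) \<noteq> 0"
      using neg[OF N(2)] slope_deriv_s by simp
    then show ?thesis unfolding DG_def \<sigma>'_def by (intro continuous_intros cD cDc cslope)
  qed
  ultimately show ?thesis using that N by blast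
qed

lemma Gamma_antipodal:
  assumes w: "w \<in> {-1<..<1}" and central: "central_about (hsec (tube c0 \<gamma>) w) c"
  shows "\<Gamma> (t + pi) w = 2 * c - \<Gamma> t w"
proof -
  interpret G: support_curve "\<lambda>t. \<Gamma> t w" using support_curve_Gamma[OF w] .
  have "range (\<lambda>t. \<Gamma> t w) = hsec (tube c0 \<gamma>) w" using range_Gamma[OF w] hsec_tube[OF w] by simp
  then have reflect: "2 * c - \<Gamma> v w \<in> range (\<lambda>t. \<Gamma> t w)" for v
    using central unfolding central_about_def by (metis rangeI)
  obtain u where u: "2 * c - \<Gamma> t w = \<Gamma> u w" using reflect by blast
  have "\<Gamma> v w \<bullet> cis (t + pi) \<le> \<Gamma> u w \<bullet> cis (t + pi)" for v
  proof -
    obtain v' where v': "2 * c - \<Gamma> v w = \<Gamma> v' w" using reflect by blast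
    have "\<Gamma> t w = 2 * c - \<Gamma> u w" using u by (simp add: algebra_simps)
    then have "(2 * c - \<Gamma> v w) \<bullet> cis t \<le> (2 * c - \<Gamma> u w) \<bullet> cis t"
      using G.height_le_support[of v' t] unfolding v' by simp
    moreover have "cis (t + pi) = - cis t" by (simp add: cis_def complex_eq_iff)
    ultimately show ?thesis by (simp add: inner_diff_left)
  qed
  then obtain k :: int where "u = t + pi + 2*pi * of_int k"
    using G.local_max_height_imp_support[of 1 u "t + pi"] by auto
  then show ?thesis using u G.shift_int by simp
qed

end

section \<open>Tilted sections\<close>

lemma antipodal_derivatives:
  fixes \<Gamma> :: "real \<Rightarrow> real \<Rightarrow> complex"
  assumes anti: "\<And>s w. w \<in> {-1<..<1} \<Longrightarrow> \<Gamma> (s + pi) w = 2 * c w - \<Gamma> s w" and z: "z \<in> {-1<..<1}"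
    and G\<theta>: "((\<lambda>s. \<Gamma> s z) has_vector_derivative G\<theta>) (at \<theta>)"
    and G\<theta>1: "((\<lambda>s. \<Gamma> s z) has_vector_derivative G\<theta>1) (at (\<theta> + pi))"
    and Gz0: "((\<lambda>w. \<Gamma> \<theta> w) has_vector_derivative Gz0) (at z)"
    and Gz1: "((\<lambda>w. \<Gamma> (\<theta> + pi) w) has_vector_derivative Gz1) (at z)"
  shows "G\<theta>1 = - G\<theta>" "vector_derivative c (at z) = (Gz0 + Gz1) / 2"
    "vector_derivative (\<lambda>w. Gamma_star \<Gamma> \<theta> w) (at z) = (Gz0 - Gz1) / 2"
    "vector_derivative (\<lambda>t. Gamma_star \<Gamma> t z) (at \<theta>) = G\<theta>"
proof -
  have "((\<lambda>s. s + pi) has_vector_derivative 1) (at \<theta>)" by (auto intro!: derivative_eq_intros)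
  from vector_diff_chain_at[OF this] G\<theta>1
  have "((\<lambda>s. \<Gamma> (s + pi) z) has_vector_derivative G\<theta>1) (at \<theta>)" by (simp add: o_def)
  moreover have "((\<lambda>s. \<Gamma> (s + pi) z) has_vector_derivative - G\<theta>) (at \<theta>)"
    using has_vector_derivative_diff[OF has_vector_derivative_const[of "2 * c z"] G\<theta>] anti[OF z] by simp
  ultimately show "G\<theta>1 = - G\<theta>" by (rule vector_derivative_unique_at)
  have "((\<lambda>w. (\<Gamma> \<theta> w + \<Gamma> (\<theta> + pi) w) / 2) has_vector_derivative (Gz0 + Gz1) / 2) (at z)"
    using has_vector_derivative_add[OF Gz0 Gz1] by (rule has_vector_derivative_divide)
  then have "(c has_vector_derivative (Gz0 + Gz1) / 2) (at z)"
    by (rule has_vector_derivative_transform_within_open[of _ _ _ "{-1<..<1}"]) (use z anti in auto)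
  then show "vector_derivative c (at z) = (Gz0 + Gz1) / 2" by (rule vector_derivative_at)
  have "((\<lambda>w. Gamma_star \<Gamma> \<theta> w) has_vector_derivative (Gz0 - Gz1) / 2) (at z)"
    unfolding Gamma_star_def using has_vector_derivative_diff[OF Gz0 Gz1] by (rule has_vector_derivative_divide)
  then show "vector_derivative (\<lambda>w. Gamma_star \<Gamma> \<theta> w) (at z) = (Gz0 - Gz1) / 2"
    by (rule vector_derivative_at)
  have "(\<lambda>t. Gamma_star \<Gamma> t z) = (\<lambda>t. \<Gamma> t z - c z)" unfolding Gamma_star_def using anti[OF z] by auto
  then show "vector_derivative (\<lambda>t. Gamma_star \<Gamma> t z) (at \<theta>) = G\<theta>"
    using has_vector_derivative_diff[OF G\<theta> has_vector_derivative_const[of "c z"]] vector_derivative_at by fastforce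
qed

lemma centrix_derivative_identity:
  fixes G\<theta> Gz0 Gz1 c Gs \<tau> :: complex
  shows "((((Gz0 \<bullet> cis \<theta>) * (\<tau> \<bullet> (\<i> * cis \<theta>))) *\<^sub>R G\<theta> + (\<tau> \<bullet> (c + Gs)) *\<^sub>R Gz0) +
      (((Gz1 \<bullet> cis (\<theta> + pi)) * (\<tau> \<bullet> (\<i> * cis (\<theta> + pi)))) *\<^sub>R (- G\<theta>) + (\<tau> \<bullet> (c - Gs)) *\<^sub>R Gz1)) / 2
    = ((\<tau> \<bullet> (\<i> * cis \<theta>)) * (((Gz0 - Gz1) / 2) \<bullet> cis \<theta>)) *\<^sub>R G\<theta>
      + (\<tau> \<bullet> c) *\<^sub>R ((Gz0 + Gz1) / 2) + (\<tau> \<bullet> Gs) *\<^sub>R ((Gz0 - Gz1) / 2)"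
proof -
  have cis_pi: "cis (\<theta> + pi) = - cis \<theta>" by (simp add: cis_def complex_eq_iff)
  have half: "((Gz0 - Gz1) / 2) \<bullet> w = (Gz0 \<bullet> w - Gz1 \<bullet> w) / 2" for w
    by (simp add: inner_complex_def field_simps)
  show ?thesis unfolding cis_pi half
    by (simp add: inner_add_left inner_diff_left inner_add_right inner_diff_right
        scaleR_conv_of_real field_simps)
qed

locale tilted_tube = std_tube +
  fixes \<tau> :: complex and z e0 :: real and \<zeta> :: "real \<Rightarrow> real \<Rightarrow> real" and \<theta>e :: "real \<Rightarrow> real \<Rightarrow> real"
    and Dz :: "real \<times> real \<Rightarrow> ((real \<times> real) \<Rightarrow>\<^sub>L real)"
  assumes z: "z \<in> {-1<..<1}" and e0: "e0 > 0"
    and zeta_deriv: "\<And>y. y \<in> {-e0<..<e0} \<times> UNIV \<Longrightarrow>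
      ((\<lambda>(\<epsilon>, t). \<zeta> \<epsilon> t) has_derivative blinfun_apply (Dz y)) (at y)"
    and zeta0: "\<And>t. \<zeta> 0 t = z"
    and zeta_eq: "\<And>\<epsilon> t. \<epsilon> \<in> {-e0<..<e0} \<Longrightarrow> \<zeta> \<epsilon> t = z + \<epsilon> * (\<tau> \<bullet> \<Gamma> t (\<zeta> \<epsilon> t))"
    and th0: "\<And>t. \<theta>e 0 t = t"
    and th_diffeo: "\<And>\<epsilon> t. \<epsilon> \<in> {-e0<..<e0} \<Longrightarrow> \<exists>d>0. (\<theta>e \<epsilon> has_real_derivative d) (at t)"
    and th_diff_0: "\<And>t. (\<lambda>\<epsilon>. \<theta>e \<epsilon> t) differentiable (at 0)"
    and th_support: "\<And>\<epsilon>. \<epsilon> \<in> {-e0<..<e0} \<Longrightarrow>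
      support_param (\<lambda>t. \<Gamma> (\<theta>e \<epsilon> t) (\<zeta> \<epsilon> (\<theta>e \<epsilon> t))) (tsec (tube c0 \<gamma>) \<tau> z \<epsilon>)"
begin

lemma zeta_has_real_derivative:
  "\<epsilon> \<in> {-e0<..<e0} \<Longrightarrow> (\<zeta> \<epsilon> has_real_derivative Dz (\<epsilon>, s) (0, 1)) (at s)"
  using has_derivative_partials(2)[OF zeta_deriv[of "(\<epsilon>, s)"]]
  by (simp add: has_real_derivative_iff_has_vector_derivative)

lemma zeta_slope_eq:
  assumes \<epsilon>: "\<epsilon> \<in> {-e0<..<e0}"
    and dG: "((\<lambda>x. \<Gamma> (fst x) (snd x)) has_derivative L) (at (s, \<zeta> \<epsilon> s))"
  shows "Dz (\<epsilon>, s) (0, 1) = \<epsilon> * (\<tau> \<bullet> L (1, 0) + Dz (\<epsilon>, s) (0, 1) * (\<tau> \<bullet> L (0, 1)))"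
proof -
  define \<zeta>s where "\<zeta>s = Dz (\<epsilon>, s) (0, 1)"
  from has_derivative_along_curve[where f = "\<lambda>x. \<Gamma> (fst x) (snd x)" and u = "\<lambda>s. s" and v = "\<zeta> \<epsilon>",
      OF _ DERIV_ident zeta_has_real_derivative[OF \<epsilon>]] dG
  have "((\<lambda>s. \<Gamma> s (\<zeta> \<epsilon> s)) has_vector_derivative 1 *\<^sub>R L (1, 0) + \<zeta>s *\<^sub>R L (0, 1)) (at s)"
    unfolding \<zeta>s_def by simp
  then have "((\<lambda>s. z + \<epsilon> * (\<tau> \<bullet> \<Gamma> s (\<zeta> \<epsilon> s))) has_real_derivative
      \<epsilon> * (\<tau> \<bullet> (L (1, 0) + \<zeta>s *\<^sub>R L (0, 1)))) (at s)"
    unfolding has_vector_derivative_def has_field_derivative_def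
    by (auto intro!: derivative_eq_intros simp: algebra_simps)
  moreover have "(\<lambda>s. z + \<epsilon> * (\<tau> \<bullet> \<Gamma> s (\<zeta> \<epsilon> s))) = \<zeta> \<epsilon>" using zeta_eq[OF \<epsilon>] by auto
  ultimately have "(\<zeta> \<epsilon> has_real_derivative \<epsilon> * (\<tau> \<bullet> (L (1, 0) + \<zeta>s *\<^sub>R L (0, 1)))) (at s)"
    by simp
  with zeta_has_real_derivative[OF \<epsilon>, of s] have "\<zeta>s = \<epsilon> * (\<tau> \<bullet> (L (1, 0) + \<zeta>s *\<^sub>R L (0, 1)))"
    unfolding \<zeta>s_def by (rule DERIV_unique)
  then show ?thesis unfolding \<zeta>s_def by (simp add: inner_add_right)
qed

lemma tilted_tangent_orthogonal:
  assumes \<epsilon>: "\<epsilon> \<in> {-e0<..<e0}"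
    and dG: "((\<lambda>x. \<Gamma> (fst x) (snd x)) has_derivative L) (at (\<theta>e \<epsilon> t, \<zeta> \<epsilon> (\<theta>e \<epsilon> t)))"
  shows "(L (1, 0) + Dz (\<epsilon>, \<theta>e \<epsilon> t) (0, 1) *\<^sub>R L (0, 1)) \<bullet> cis t = 0"
proof -
  define \<zeta>s where "\<zeta>s = Dz (\<epsilon>, \<theta>e \<epsilon> t) (0, 1)"
  obtain \<theta>' where \<theta>': "\<theta>' > 0" "(\<theta>e \<epsilon> has_real_derivative \<theta>') (at t)" using th_diffeo[OF \<epsilon>] by blast
  have "((\<lambda>s. \<zeta> \<epsilon> (\<theta>e \<epsilon> s)) has_real_derivative \<zeta>s * \<theta>') (at t)"
    unfolding \<zeta>s_def by (rule DERIV_chain2[OF zeta_has_real_derivative[OF \<epsilon>] \<theta>'(2)])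
  from has_derivative_along_curve[where f = "\<lambda>x. \<Gamma> (fst x) (snd x)", OF _ \<theta>'(2) this] dG
  have tilted: "((\<lambda>s. \<Gamma> (\<theta>e \<epsilon> s) (\<zeta> \<epsilon> (\<theta>e \<epsilon> s))) has_vector_derivative
      \<theta>' *\<^sub>R (L (1, 0) + \<zeta>s *\<^sub>R L (0, 1))) (at t)"
    by (simp add: scaleR_add_right mult.commute)
  obtain d where dd: "((\<lambda>s. \<Gamma> (\<theta>e \<epsilon> s) (\<zeta> \<epsilon> (\<theta>e \<epsilon> s))) has_vector_derivative d) (at t)"
      and d: "d = complex_of_real (cmod d) * \<i> * exp (\<i> * complex_of_real t)"
    using th_support[OF \<epsilon>] unfolding support_param_def by blast
  have "d = \<theta>' *\<^sub>R (L (1, 0) + \<zeta>s *\<^sub>R L (0, 1))" using vector_derivative_unique_at[OF dd tilted] .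
  moreover have "d \<bullet> cis t = 0" by (subst d) (simp add: inner_tangent_cis)
  ultimately have "(\<theta>' *\<^sub>R (L (1, 0) + \<zeta>s *\<^sub>R L (0, 1))) \<bullet> cis t = 0" by simp
  then show ?thesis using \<theta>'(1) unfolding \<zeta>s_def by simp
qed

lemma tilted_support_relation:
  assumes \<epsilon>: "\<epsilon> \<in> {-e0<..<e0}" and w: "\<zeta> \<epsilon> (\<theta>e \<epsilon> t) \<in> {-1<..<1}"
    and dG: "((\<lambda>x. \<Gamma> (fst x) (snd x)) has_derivative L) (at (\<theta>e \<epsilon> t, \<zeta> \<epsilon> (\<theta>e \<epsilon> t)))"
  shows "cmod (L (1, 0)) * sin (t - \<theta>e \<epsilon> t) * (1 - \<epsilon> * (\<tau> \<bullet> L (0, 1)))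
    + \<epsilon> * (\<tau> \<bullet> L (1, 0)) * (L (0, 1) \<bullet> cis t) = 0"
proof -
  define \<zeta>s where "\<zeta>s = Dz (\<epsilon>, \<theta>e \<epsilon> t) (0, 1)"
  define \<rho> where "\<rho> = cmod (L (1, 0))"
  have "L (1, 0) = complex_of_real \<rho> * \<i> * exp (\<i> * complex_of_real (\<theta>e \<epsilon> t))"
    using Gamma_tangent_direction[OF w] has_derivative_partials(1)[OF dG] unfolding \<rho>_def by simp
  then have "L (1, 0) \<bullet> cis t = cmod (L (1, 0)) * sin (t - \<theta>e \<epsilon> t)"
    unfolding \<rho>_def[symmetric] by (simp only: inner_tangent_cis)
  then have orth: "cmod (L (1, 0)) * sin (t - \<theta>e \<epsilon> t) + \<zeta>s * (L (0, 1) \<bullet> cis t) = 0"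
    using tilted_tangent_orthogonal[OF \<epsilon> dG] unfolding \<zeta>s_def by (simp add: inner_add_left)
  define A where "A = L (0, 1) \<bullet> cis t"
  define B where "B = 1 - \<epsilon> * (\<tau> \<bullet> L (0, 1))"
  have slope: "\<zeta>s * B = \<epsilon> * (\<tau> \<bullet> L (1, 0))"
    using zeta_slope_eq[OF \<epsilon> dG] unfolding \<zeta>s_def B_def by (simp add: algebra_simps)
  have "0 = (cmod (L (1, 0)) * sin (t - \<theta>e \<epsilon> t) + \<zeta>s * A) * B" using orth unfolding A_def by simp
  also have "\<dots> = cmod (L (1, 0)) * sin (t - \<theta>e \<epsilon> t) * B + A * (\<zeta>s * B)" by (simp add: algebra_simps)
  finally have "0 = cmod (L (1, 0)) * sin (t - \<theta>e \<epsilon> t) * B + A * (\<zeta>s * B)" .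
  then show ?thesis unfolding slope unfolding A_def B_def by (simp add: algebra_simps)
qed

text \<open>Divide \<open>tilted_support_relation\<close> by \<open>\<epsilon>\<close> and let \<open>\<epsilon> \<rightarrow> 0\<close>.\<close>
lemma tilted_param_speed:
  assumes N: "open N" "(t, z) \<in> N" "N \<subseteq> UNIV \<times> {-1<..<1}"
    and DG: "\<And>x. x \<in> N \<Longrightarrow> ((\<lambda>x. \<Gamma> (fst x) (snd x)) has_derivative DG x) (at x)"
    and DG_cont: "\<And>h. isCont (\<lambda>x. DG x h) (t, z)"
    and ut: "((\<lambda>\<epsilon>. \<theta>e \<epsilon> t) has_real_derivative ut) (at 0)"
    and Z_cont: "isCont (\<lambda>\<epsilon>. \<zeta> \<epsilon> (\<theta>e \<epsilon> t)) 0"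
  shows "ut *\<^sub>R DG (t, z) (1, 0) = ((DG (t, z) (0, 1) \<bullet> cis t) * (\<tau> \<bullet> (\<i> * cis t))) *\<^sub>R DG (t, z) (1, 0)"
proof -
  define g where "g \<epsilon> = (\<theta>e \<epsilon> t, \<zeta> \<epsilon> (\<theta>e \<epsilon> t))" for \<epsilon>
  define \<rho> where "\<rho> x = cmod (DG x (1, 0))" for x
  define H where "H \<epsilon> = \<rho> (g \<epsilon>) * (sin (t - \<theta>e \<epsilon> t) / \<epsilon>) * (1 - \<epsilon> * (\<tau> \<bullet> DG (g \<epsilon>) (0, 1)))
      + (\<tau> \<bullet> DG (g \<epsilon>) (1, 0)) * (DG (g \<epsilon>) (0, 1) \<bullet> cis t)" for \<epsilon>
  have "(g \<longlongrightarrow> (t, z)) (at 0)"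
    using DERIV_isCont[OF ut] Z_cont th0 zeta0 unfolding g_def
    by (auto intro!: tendsto_eq_intros simp: continuous_at)
  then have "\<forall>\<^sub>F \<epsilon> in at 0. g \<epsilon> \<in> N" using N(1,2) by (rule topological_tendstoD)
  moreover have "\<forall>\<^sub>F \<epsilon> in at 0. \<epsilon> \<in> {-e0<..<e0}" using e0 by (intro eventually_at_in_open') auto
  moreover have "\<forall>\<^sub>F \<epsilon> in at 0. \<epsilon> \<noteq> (0::real)" by (rule eventually_neq_at_within)
  ultimately have "\<forall>\<^sub>F \<epsilon> in at 0. H \<epsilon> = 0"
  proof eventually_elim
    case (elim \<epsilon>)
    then have "snd (g \<epsilon>) \<in> {-1<..<1}" using N(3) by auto
    from tilted_support_relation[OF elim(2) this[unfolded g_def snd_conv] DG[OF elim(1), unfolded g_def]]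
    show "H \<epsilon> = 0" using elim(3) unfolding H_def \<rho>_def g_def by (simp add: field_simps)
  qed
  then have "(H \<longlongrightarrow> 0) (at 0)" by (rule tendsto_eventually)
  moreover have "((\<lambda>\<epsilon>. sin (t - \<theta>e \<epsilon> t) / \<epsilon>) \<longlongrightarrow> - ut) (at 0)"
  proof -
    have "((\<lambda>\<epsilon>. sin (t - \<theta>e \<epsilon> t)) has_real_derivative cos (t - \<theta>e 0 t) * (0 - ut)) (at 0)"
      by (intro DERIV_fun_sin DERIV_diff DERIV_const ut)
    then show ?thesis unfolding DERIV_def using th0 by simp
  qed
  then have "(H \<longlongrightarrow> \<rho> (t, z) * (- ut) * (1 - 0 * (\<tau> \<bullet> DG (t, z) (0, 1)))
      + (\<tau> \<bullet> DG (t, z) (1, 0)) * (DG (t, z) (0, 1) \<bullet> cis t)) (at 0)"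
    unfolding H_def \<rho>_def using isCont_tendsto_compose[OF DG_cont \<open>(g \<longlongrightarrow> (t, z)) (at 0)\<close>]
    by (intro tendsto_intros) auto
  ultimately have lim: "\<rho> (t, z) * ut = (\<tau> \<bullet> DG (t, z) (1, 0)) * (DG (t, z) (0, 1) \<bullet> cis t)"
    using tendsto_unique[OF at_neq_bot] by fastforce
  have G\<theta>: "DG (t, z) (1, 0) = \<rho> (t, z) *\<^sub>R (\<i> * cis t)"
    using Gamma_tangent_direction has_derivative_partials(1)[OF DG[OF N(2)]] N(2,3)
    unfolding \<rho>_def by (auto simp: cis_conv_exp scaleR_conv_of_real mult.assoc)
  show ?thesis
  proof (cases "\<rho> (t, z) = 0")
    case False
    then have "ut = (DG (t, z) (0, 1) \<bullet> cis t) * (\<tau> \<bullet> (\<i> * cis t))"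
      using lim unfolding G\<theta> by (simp add: field_simps)
    then show ?thesis by simp
  qed (simp add: G\<theta>)
qed

lemma tilted_Gamma_has_derivative:
  obtains G\<theta> Gz where "((\<lambda>s. \<Gamma> s z) has_vector_derivative G\<theta>) (at t)"
    "((\<lambda>w. \<Gamma> t w) has_vector_derivative Gz) (at z)"
    "((\<lambda>\<epsilon>. \<Gamma> (\<theta>e \<epsilon> t) (\<zeta> \<epsilon> (\<theta>e \<epsilon> t))) has_vector_derivative
        (((Gz \<bullet> cis t) * (\<tau> \<bullet> (\<i> * cis t))) *\<^sub>R G\<theta> + (\<tau> \<bullet> \<Gamma> t z) *\<^sub>R Gz)) (at 0)"
proof -
  obtain N DG where N: "open N" "(t, z) \<in> N" "N \<subseteq> UNIV \<times> {-1<..<1}"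
      and DG: "\<And>x. x \<in> N \<Longrightarrow> ((\<lambda>x. \<Gamma> (fst x) (snd x)) has_derivative DG x) (at x)"
      and DG_cont: "\<And>h. isCont (\<lambda>x. DG x h) (t, z)"
    using Gamma_C1[OF z] by blast
  define G\<theta> where "G\<theta> = DG (t, z) (1, 0)"
  define Gz where "Gz = DG (t, z) (0, 1)"
  obtain ut where ut: "((\<lambda>\<epsilon>. \<theta>e \<epsilon> t) has_real_derivative ut) (at 0)"
    using th_diff_0 DERIV_deriv_iff_real_differentiable by blast
  define Zd where "Zd = Dz (0, t) (1, 0) + ut * Dz (0, t) (0, 1)"
  have Z: "((\<lambda>\<epsilon>. \<zeta> \<epsilon> (\<theta>e \<epsilon> t)) has_real_derivative Zd) (at 0)"
    using has_derivative_along_curve[where f = "\<lambda>(\<epsilon>, s). \<zeta> \<epsilon> s" and u = "\<lambda>\<epsilon>. \<epsilon>", OF _ DERIV_ident ut]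
      zeta_deriv[of "(0, t)"] e0 th0 unfolding Zd_def
    by (simp add: has_real_derivative_iff_has_vector_derivative)
  have P: "((\<lambda>\<epsilon>. \<Gamma> (\<theta>e \<epsilon> t) (\<zeta> \<epsilon> (\<theta>e \<epsilon> t))) has_vector_derivative ut *\<^sub>R G\<theta> + Zd *\<^sub>R Gz) (at 0)"
    using has_derivative_along_curve[where f = "\<lambda>x. \<Gamma> (fst x) (snd x)", OF _ ut Z] DG[OF N(2)]
      th0 zeta0 unfolding G\<theta>_def Gz_def by simp
  have "Zd = \<tau> \<bullet> \<Gamma> (\<theta>e 0 t) (\<zeta> 0 (\<theta>e 0 t))"
  proof (rule DERIV_at_0_of_factor[OF Z])
    show "isCont (\<lambda>\<epsilon>. \<tau> \<bullet> \<Gamma> (\<theta>e \<epsilon> t) (\<zeta> \<epsilon> (\<theta>e \<epsilon> t))) 0"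
      using has_vector_derivative_continuous[OF P] by (intro continuous_intros)
    show "\<forall>\<^sub>F \<epsilon> in at 0. \<zeta> \<epsilon> (\<theta>e \<epsilon> t) = \<zeta> 0 (\<theta>e 0 t) + \<epsilon> * (\<tau> \<bullet> \<Gamma> (\<theta>e \<epsilon> t) (\<zeta> \<epsilon> (\<theta>e \<epsilon> t)))"
      using eventually_at_in_open'[of "{-e0<..<e0}" 0] e0 zeta_eq zeta0 by (auto elim!: eventually_mono)
  qed
  then have "Zd = \<tau> \<bullet> \<Gamma> t z" using th0 zeta0 by simp
  moreover have "ut *\<^sub>R G\<theta> = ((Gz \<bullet> cis t) * (\<tau> \<bullet> (\<i> * cis t))) *\<^sub>R G\<theta>"
    unfolding G\<theta>_def Gz_def using tilted_param_speed[OF N DG DG_cont ut DERIV_isCont[OF Z]] .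
  moreover note has_derivative_partials[OF DG[OF N(2)]]
  ultimately show ?thesis using that P unfolding G\<theta>_def Gz_def by auto
qed

lemma tilt_centrix_has_derivative:
  assumes central: "\<And>w. w \<in> {-1<..<1} \<Longrightarrow> central_about (hsec (tube c0 \<gamma>) w) (c w)"
  shows "((\<lambda>\<epsilon>. tilt_centrix \<Gamma> \<zeta> \<theta>e \<epsilon> \<theta>) has_vector_derivative
           ((\<tau> \<bullet> (\<i> * exp (\<i> * complex_of_real \<theta>)))
              * (vector_derivative (\<lambda>w. Gamma_star \<Gamma> \<theta> w) (at z) \<bullet> exp (\<i> * complex_of_real \<theta>)))
             *\<^sub>R vector_derivative (\<lambda>t. Gamma_star \<Gamma> t z) (at \<theta>)
           + (\<tau> \<bullet> c z) *\<^sub>R vector_derivative c (at z)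
           + (\<tau> \<bullet> Gamma_star \<Gamma> \<theta> z) *\<^sub>R vector_derivative (\<lambda>w. Gamma_star \<Gamma> \<theta> w) (at z))
         (at 0)"
proof -
  have anti: "\<Gamma> (s + pi) w = 2 * c w - \<Gamma> s w" if "w \<in> {-1<..<1}" for s w
    using Gamma_antipodal[OF that central[OF that]] .
  obtain G\<theta> Gz0 where G0: "((\<lambda>s. \<Gamma> s z) has_vector_derivative G\<theta>) (at \<theta>)"
      "((\<lambda>w. \<Gamma> \<theta> w) has_vector_derivative Gz0) (at z)"
      "((\<lambda>\<epsilon>. \<Gamma> (\<theta>e \<epsilon> \<theta>) (\<zeta> \<epsilon> (\<theta>e \<epsilon> \<theta>))) has_vector_derivative
        (((Gz0 \<bullet> cis \<theta>) * (\<tau> \<bullet> (\<i> * cis \<theta>))) *\<^sub>R G\<theta> + (\<tau> \<bullet> \<Gamma> \<theta> z) *\<^sub>R Gz0)) (at 0)"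
    using tilted_Gamma_has_derivative by blast
  obtain G\<theta>1 Gz1 where G1: "((\<lambda>s. \<Gamma> s z) has_vector_derivative G\<theta>1) (at (\<theta> + pi))"
      "((\<lambda>w. \<Gamma> (\<theta> + pi) w) has_vector_derivative Gz1) (at z)"
      "((\<lambda>\<epsilon>. \<Gamma> (\<theta>e \<epsilon> (\<theta> + pi)) (\<zeta> \<epsilon> (\<theta>e \<epsilon> (\<theta> + pi)))) has_vector_derivative
        (((Gz1 \<bullet> cis (\<theta> + pi)) * (\<tau> \<bullet> (\<i> * cis (\<theta> + pi)))) *\<^sub>R G\<theta>1 + (\<tau> \<bullet> \<Gamma> (\<theta> + pi) z) *\<^sub>R Gz1)) (at 0)"
    using tilted_Gamma_has_derivative by blast
  obtain G\<theta>1: "G\<theta>1 = - G\<theta>" and dc: "vector_derivative c (at z) = (Gz0 + Gz1) / 2"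
    and dz: "vector_derivative (\<lambda>w. Gamma_star \<Gamma> \<theta> w) (at z) = (Gz0 - Gz1) / 2"
    and dt: "vector_derivative (\<lambda>t. Gamma_star \<Gamma> t z) (at \<theta>) = G\<theta>"
    using antipodal_derivatives[OF anti z G0(1) G1(1) G0(2) G1(2)] by blast
  define Gs where "Gs = \<Gamma> \<theta> z - c z"
  have star: "Gamma_star \<Gamma> \<theta> z = Gs" unfolding Gamma_star_def anti[OF z] Gs_def by simp
  have \<Gamma>0: "\<Gamma> \<theta> z = c z + Gs" and \<Gamma>1: "\<Gamma> (\<theta> + pi) z = c z - Gs"
    unfolding Gs_def anti[OF z] by simp_all
  have "((\<lambda>\<epsilon>. tilt_centrix \<Gamma> \<zeta> \<theta>e \<epsilon> \<theta>) has_vector_derivative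
     ((((Gz0 \<bullet> cis \<theta>) * (\<tau> \<bullet> (\<i> * cis \<theta>))) *\<^sub>R G\<theta> + (\<tau> \<bullet> \<Gamma> \<theta> z) *\<^sub>R Gz0) +
      (((Gz1 \<bullet> cis (\<theta> + pi)) * (\<tau> \<bullet> (\<i> * cis (\<theta> + pi)))) *\<^sub>R G\<theta>1
        + (\<tau> \<bullet> \<Gamma> (\<theta> + pi) z) *\<^sub>R Gz1)) / 2) (at 0)"
    unfolding tilt_centrix_def[abs_def] by (intro has_vector_derivative_divide has_vector_derivative_add G0(3) G1(3))
  then show ?thesis
    unfolding G\<theta>1 \<Gamma>1 \<Gamma>0 centrix_derivative_identity dc dz dt star cis_conv_exp[symmetric] .
qed

end

lemma std_tube_of_tc_tube_std:
  assumes "tc_tube_std c0 \<gamma>" and "\<forall>w\<in>{-1<..<1}. support_param (\<lambda>t. \<Gamma> t w) (hsec (tube c0 \<gamma>) w)"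
  obtains D D2 Dc Dc2 where "std_tube c0 \<gamma> \<Gamma> D D2 Dc Dc2"
proof -
  obtain Dc Dc2 where "\<forall>x\<in>{-1<..<1}. (c0 has_derivative blinfun_apply (Dc x)) (at x)
      \<and> (Dc has_derivative blinfun_apply (Dc2 x)) (at x)"
    using assms(1) unfolding tc_tube_std_def C2_on_def by blast
  moreover obtain D D2 where "\<forall>x\<in>UNIV \<times> {-1<..<1}. ((\<lambda>(\<theta>, z). \<gamma> z \<theta>) has_derivative blinfun_apply (D x)) (at x)
      \<and> (D has_derivative blinfun_apply (D2 x)) (at x)" "continuous_on (UNIV \<times> {-1<..<1}) D2"
    using assms(1) unfolding tc_tube_std_def C2_on_def by blast
  ultimately have "std_tube c0 \<gamma> \<Gamma> D D2 Dc Dc2"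
    using assms unfolding std_tube_def tc_tube_std_def by blast
  then show ?thesis by (rule that)
qed

theorem lemma3p7:
  fixes c0 :: "real \<Rightarrow> complex" and \<gamma> :: "real \<Rightarrow> real \<Rightarrow> complex"
    and \<Gamma> :: "real \<Rightarrow> real \<Rightarrow> complex" and c :: "real \<Rightarrow> complex"
    and \<tau> :: complex and z :: real and e0 :: real
    and \<zeta> :: "real \<Rightarrow> real \<Rightarrow> real" and \<theta>e :: "real \<Rightarrow> real \<Rightarrow> real" and \<theta> :: real
  assumes tube: "tc_tube_std c0 \<gamma>"
    and support: "\<forall>w\<in>{-1<..<1}. support_param (\<lambda>t. \<Gamma> t w) (hsec (tube c0 \<gamma>) w)"
    and central: "\<forall>w\<in>{-1<..<1}. central_about (hsec (tube c0 \<gamma>) w) (c w)"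
    and tau: "cmod \<tau> = 1"
    and z: "z \<in> {-1<..<1}"
    and e0: "e0 > 0"
    and zeta_C2: "C2_on ({-e0<..<e0} \<times> UNIV) (\<lambda>(\<epsilon>, t). \<zeta> \<epsilon> t)"
    and zeta0: "\<forall>t. \<zeta> 0 t = z"
    and zeta_range: "\<forall>\<epsilon>\<in>{-e0<..<e0}. \<forall>t. \<zeta> \<epsilon> t \<in> {-1<..<1}"
    and zeta_eq: "\<forall>\<epsilon>\<in>{-e0<..<e0}. \<forall>t. \<zeta> \<epsilon> t = z + \<epsilon> * (\<tau> \<bullet> \<Gamma> t (\<zeta> \<epsilon> t))"
    and th0: "\<forall>t. \<theta>e 0 t = t"
    and th_lift: "\<forall>\<epsilon>\<in>{-e0<..<e0}. \<forall>t. \<theta>e \<epsilon> (t + 2*pi) = \<theta>e \<epsilon> t + 2*pi"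
    and th_diffeo: "\<forall>\<epsilon>\<in>{-e0<..<e0}. \<forall>t. \<exists>d>0. (\<theta>e \<epsilon> has_real_derivative d) (at t)"
    and th_C1: "\<forall>\<epsilon>\<in>{-e0<..<e0}. continuous_on UNIV (deriv (\<theta>e \<epsilon>))"
    and th_diff_eps: "\<forall>\<epsilon>\<in>{-e0<..<e0}. \<forall>t. (\<lambda>e. \<theta>e e t) differentiable (at \<epsilon>)"
    and th_support: "\<forall>\<epsilon>\<in>{-e0<..<e0}.
        support_param (\<lambda>t. \<Gamma> (\<theta>e \<epsilon> t) (\<zeta> \<epsilon> (\<theta>e \<epsilon> t))) (tsec (tube c0 \<gamma>) \<tau> z \<epsilon>)"
  shows "((\<lambda>\<epsilon>. tilt_centrix \<Gamma> \<zeta> \<theta>e \<epsilon> \<theta>) has_vector_derivative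
           ((\<tau> \<bullet> (\<i> * exp (\<i> * complex_of_real \<theta>)))
              * (vector_derivative (\<lambda>w. Gamma_star \<Gamma> \<theta> w) (at z) \<bullet> exp (\<i> * complex_of_real \<theta>)))
             *\<^sub>R vector_derivative (\<lambda>t. Gamma_star \<Gamma> t z) (at \<theta>)
           + (\<tau> \<bullet> c z) *\<^sub>R vector_derivative c (at z)
           + (\<tau> \<bullet> Gamma_star \<Gamma> \<theta> z) *\<^sub>R vector_derivative (\<lambda>w. Gamma_star \<Gamma> \<theta> w) (at z))
         (at 0)"
proof -
  obtain D D2 Dc Dc2 where tube: "std_tube c0 \<gamma> \<Gamma> D D2 Dc Dc2"
    using std_tube_of_tc_tube_std[OF tube support] .
  obtain Dz :: "real \<times> real \<Rightarrow> ((real \<times> real) \<Rightarrow>\<^sub>L real)"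
    where Dz: "\<And>y. y \<in> {-e0<..<e0} \<times> UNIV \<Longrightarrow> ((\<lambda>(\<epsilon>, t). \<zeta> \<epsilon> t) has_derivative Dz y) (at y)"
    using zeta_C2 unfolding C2_on_def by blast
  have "0 \<in> {-e0<..<e0}" using e0 by simp
  then interpret tilted_tube c0 \<gamma> \<Gamma> D D2 Dc Dc2 \<tau> z e0 \<zeta> \<theta>e Dz
    using tube z e0 Dz zeta0 zeta_eq th0 th_diffeo th_diff_eps th_support
    unfolding tilted_tube_def tilted_tube_axioms_def by blast
  show ?thesis using tilt_centrix_has_derivative central by blast
qed

end
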